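(* Let $\Xi\subset\mathbb R$ be a parameter set, let $\xi\mapsto H_\xi$ be a differentiable family of $d\times d$ Hermitian matrices with non-degenerate spectrum, fix a time $t$, and let $U_t=\exp(-itH_\xi)$. Then for every $\xi$, $$\mathcal G_\xi\le\big(\sigma[\mathfrak g_{U,\xi}]+\sigma[\mathfrak g_{S,\xi}]\big)^2,$$ where $\mathfrak g_{U,\xi}=i(\partial_\xi U_t)U_t^\dagger$ and $\mathfrak g_{S,\xi}=i(\partial_\xi S_\xi)S_\xi^\dagger$.
   Context: For a Hermitian matrix $M$ with eigenvalues $\lambda_1(M)\ge\dots\ge\lambda_d(M)$, the spectral gap is $\sigma(M):=\lambda_1(M)-\lambda_d(M)$. Let $\{|0\rangle,\dots,|d-1\rangle\}$ be the computational basis of $\mathbb C^d$, $P_j=|j\rangle\langle j|$. Let $E_{j,\xi}:=\lambda_{d-j}(H_\xi)$ ($j=0,\dots,d-1$) be the eigenvalues of $H_\xi$ with normalized eigenvectors $|E_{j,\xi}\rangle$, chosen to depend differentiably on $\xi$, and $P_{E_{j,\xi}}=|E_{j,\xi}\rangle\langle E_{j,\xi}|$. Let $S_\xi$ be the unitary with $S_\xi|E_{j,\xi}\rangle=|j\rangle$ for all $j$ (i.e. $\langle j|S_\xi|k\rangle=\langle E_{j,\xi}|k\rangle$). For a density matrix $\rho_0$ on $\mathbb C^d$, set $\rho_\xi=U_t\rho_0U_t^\dagger$. For a unitary $V\in U(d)$ (independent of $\xi$), the controlled energy measurement $\mathscr M_{V,\xi}$ is the POVM with elements $V^\dagger P_{E_{j,\xi}}V$,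 $j=0,\dots,d-1$; it yields outcome $j$ with probability $p_{j,\xi}=\mathrm{tr}[\rho_\xi V^\dagger P_{E_{j,\xi}}V]$. Its Fisher information is $\mathcal F_\xi(\rho_0,\mathscr M_{V,\xi})=\sum_{j}p_{j,\xi}(\partial_\xi\ln p_{j,\xi})^2$ (sum over $j$ with $p_{j,\xi}>0$). The quantity $\mathcal G_\xi$ is defined as $\mathcal G_\xi=\max_{\rho_0}\max_{V\in U(d)}\mathcal F_\xi(\rho_0,\mathscr M_{V,\xi})$, the maximum over all density matrices $\rho_0$ and all unitary controls $V$. *)

theory Defs
  imports "HOL-Analysis.Derivative" "Jordan_Normal_Form.Char_Poly" "Jordan_Normal_Form.Conjugate"
begin

(* All matrices are d x d complex matrices (Jordan_Normal_Form 'a mat), indices 0..d-1;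
   the computational basis vector |j> is the j-th unit vector. *)

definition adj :: "complex mat \<Rightarrow> complex mat" where
  "adj A = mat (dim_col A) (dim_row A) (\<lambda>(i,j). cnj (A $$ (j,i)))"

definition mtrace :: "complex mat \<Rightarrow> complex" where
  "mtrace A = (\<Sum>i<dim_row A. A $$ (i,i))"

definition hermitian_mat :: "nat \<Rightarrow> complex mat \<Rightarrow> bool" where
  "hermitian_mat d A \<longleftrightarrow> A \<in> carrier_mat d d \<and> adj A = A"

definition unitary_mat :: "nat \<Rightarrow> complex mat \<Rightarrow> bool" where
  "unitary_mat d V \<longleftrightarrow> V \<in> carrier_mat d d \<and> adj V * V = 1\<^sub>m d \<and> V * adj V = 1\<^sub>m d"

definition density_mat :: "nat \<Rightarrow> complex mat \<Rightarrow> bool" where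
  "density_mat d \<rho> \<longleftrightarrow> hermitian_mat d \<rho>
     \<and> (\<forall>v \<in> carrier_vec d. 0 \<le> Re ((\<rho> *\<^sub>v v) \<bullet>c v))
     \<and> mtrace \<rho> = 1"

(* spectral gap lambda_1(M) - lambda_d(M) of a Hermitian matrix (its eigenvalues are real) *)
definition spectral_gap :: "complex mat \<Rightarrow> real" where
  "spectral_gap M = Max (Re ` {k. eigenvalue M k}) - Min (Re ` {k. eigenvalue M k})"

definition mat_exp :: "complex mat \<Rightarrow> complex mat" where
  "mat_exp A = mat (dim_row A) (dim_col A)
     (\<lambda>(i,j). \<Sum>k. (A ^\<^sub>m k) $$ (i,j) / of_nat (fact k))"

definition mderiv :: "nat \<Rightarrow> (real \<Rightarrow> complex mat) \<Rightarrow> real \<Rightarrow> complex mat" where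
  "mderiv d F x = mat d d (\<lambda>(i,j). vector_derivative (\<lambda>y. F y $$ (i,j)) (at x))"

definition proj :: "nat \<Rightarrow> complex vec \<Rightarrow> complex mat" where
  "proj d v = mat d d (\<lambda>(i,j). v $ i * cnj (v $ j))"

definition evol :: "(real \<Rightarrow> complex mat) \<Rightarrow> real \<Rightarrow> real \<Rightarrow> complex mat" where
  "evol H t x = mat_exp ((- (\<i> * of_real t)) \<cdot>\<^sub>m H x)"

(* S_xi with <j|S_xi|k> = <E_{j,xi}|k> = conj of k-th component of the j-th eigenvector *)
definition Smat :: "nat \<Rightarrow> (nat \<Rightarrow> real \<Rightarrow> complex vec) \<Rightarrow> real \<Rightarrow> complex mat" where
  "Smat d e x = mat d d (\<lambda>(j,k). cnj (e j x $ k))"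

definition gU :: "nat \<Rightarrow> (real \<Rightarrow> complex mat) \<Rightarrow> real \<Rightarrow> real \<Rightarrow> complex mat" where
  "gU d H t x = \<i> \<cdot>\<^sub>m (mderiv d (evol H t) x * adj (evol H t x))"

definition gS :: "nat \<Rightarrow> (nat \<Rightarrow> real \<Rightarrow> complex vec) \<Rightarrow> real \<Rightarrow> complex mat" where
  "gS d e x = \<i> \<cdot>\<^sub>m (mderiv d (Smat d e) x * adj (Smat d e x))"

definition outcome_prob :: "nat \<Rightarrow> (real \<Rightarrow> complex mat) \<Rightarrow> (nat \<Rightarrow> real \<Rightarrow> complex vec)
    \<Rightarrow> real \<Rightarrow> complex mat \<Rightarrow> complex mat \<Rightarrow> nat \<Rightarrow> real \<Rightarrow> real" where
  "outcome_prob d H e t \<rho>0 V j x =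
     Re (mtrace (evol H t x * \<rho>0 * adj (evol H t x) * adj V * proj d (e j x) * V))"

definition fisher_info :: "nat \<Rightarrow> (real \<Rightarrow> complex mat) \<Rightarrow> (nat \<Rightarrow> real \<Rightarrow> complex vec)
    \<Rightarrow> real \<Rightarrow> complex mat \<Rightarrow> complex mat \<Rightarrow> real \<Rightarrow> real" where
  "fisher_info d H e t \<rho>0 V x =
     (\<Sum>j \<in> {j. j < d \<and> 0 < outcome_prob d H e t \<rho>0 V j x}.
        outcome_prob d H e t \<rho>0 V j x
        * (deriv (\<lambda>y. ln (outcome_prob d H e t \<rho>0 V j y)) x)^2)"

end

theory Submission
  imports Defs
begin

unbundle no vec_syntax

text \<open>Diagonalise \<open>\<rho>0 = \<Sum>k. lam k |u k><u k|\<close> and put \<open>R = S V U\<close>, so that the outcome probabilities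
  are \<open>p j = \<Sum>k. lam k |(R u k) j|\<^sup>2\<close>. Unitarity of \<open>S\<close> and \<open>U\<close> gives
  \<open>\<i> R' = g\<^sub>S R + S V g\<^sub>U U\<close>, and shifting \<open>g\<^sub>S, g\<^sub>U\<close> by real scalars \<open>c\<^sub>S, c\<^sub>U\<close> does not change
  \<open>p j'\<close>, since a real multiple of \<open>R\<close> only adds an imaginary term to the amplitude products.
  Taking \<open>c\<^sub>S, c\<^sub>U\<close> to be the midpoints of the spectra, the shifted generators have norm at most half
  their spectral gaps, so \<open>y k = (\<i> R' - (c\<^sub>S + c\<^sub>U) R) u k\<close> has norm at most
  \<open>r = (\<sigma> g\<^sub>U + \<sigma> g\<^sub>S) / 2\<close>. Cauchy-Schwarz gives \<open>(p j')\<^sup>2 \<le> 4 p j \<Sum>k. lam k |(y k) j|\<^sup>2\<close>,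
  and summing over \<open>j\<close> bounds the Fisher information by \<open>4 r\<^sup>2\<close>.\<close>

section \<open>Coordinates, adjoints and the complex inner product\<close>

lemma dim_adj [simp]: "dim_row (adj A) = dim_col A" "dim_col (adj A) = dim_row A"
  unfolding adj_def by simp_all

lemma index_adj [simp]: "i < dim_col A \<Longrightarrow> j < dim_row A \<Longrightarrow> adj A $$ (i,j) = cnj (A $$ (j,i))"
  unfolding adj_def by simp

lemma adj_carrier_mat [simp]: "A \<in> carrier_mat n m \<Longrightarrow> adj A \<in> carrier_mat m n"
  by (metis dim_adj carrier_matD carrier_matI)

lemma row_scalar_prod_sum:
  "(A :: 'a :: semiring_0 mat) \<in> carrier_mat n m \<Longrightarrow> v \<in> carrier_vec m \<Longrightarrow> i < n \<Longrightarrow>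
   row A i \<bullet> v = (\<Sum>j<m. A $$ (i,j) * v $ j)"
  by (simp add: scalar_prod_def atLeast0LessThan)

lemma row_col_scalar_prod_sum:
  "(A :: 'a :: semiring_0 mat) \<in> carrier_mat n m \<Longrightarrow> B \<in> carrier_mat m l \<Longrightarrow> i < n \<Longrightarrow> j < l \<Longrightarrow>
   row A i \<bullet> col B j = (\<Sum>k<m. A $$ (i,k) * B $$ (k,j))"
  by (simp add: scalar_prod_def atLeast0LessThan)

lemma index_mult_mat_sum:
  "(A :: 'a :: semiring_0 mat) \<in> carrier_mat n m \<Longrightarrow> B \<in> carrier_mat m l \<Longrightarrow> i < n \<Longrightarrow> j < l \<Longrightarrow>
   (A * B) $$ (i,j) = (\<Sum>k<m. A $$ (i,k) * B $$ (k,j))"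
  by (simp add: row_col_scalar_prod_sum)

lemma index_mult_mat_vec_sum:
  "(A :: 'a :: semiring_0 mat) \<in> carrier_mat n m \<Longrightarrow> v \<in> carrier_vec m \<Longrightarrow> i < n \<Longrightarrow>
   (A *\<^sub>v v) $ i = (\<Sum>j<m. A $$ (i,j) * v $ j)"
  by (simp add: row_scalar_prod_sum)

lemma cscalar_prod_sum: "(w :: complex vec) \<in> carrier_vec d \<Longrightarrow> v \<bullet>c w = (\<Sum>i<d. v $ i * cnj (w $ i))"
  unfolding scalar_prod_def by (simp add: atLeast0LessThan)

lemma cscalar_prod_swap:
  "(v :: complex vec) \<in> carrier_vec d \<Longrightarrow> w \<in> carrier_vec d \<Longrightarrow> v \<bullet>c w = cnj (w \<bullet>c v)"
  by (simp add: cscalar_prod_sum mult.commute)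

lemma cscalar_prod_smult_left:
  "(w :: complex vec) \<in> carrier_vec d \<Longrightarrow> v \<in> carrier_vec d \<Longrightarrow> (c \<cdot>\<^sub>v v) \<bullet>c w = c * (v \<bullet>c w)"
  by (simp add: cscalar_prod_sum sum_distrib_left mult_ac)

lemma cscalar_prod_smult_right:
  "(w :: complex vec) \<in> carrier_vec d \<Longrightarrow> v \<bullet>c (c \<cdot>\<^sub>v w) = cnj c * (v \<bullet>c w)"
  by (simp add: cscalar_prod_sum sum_distrib_left mult_ac)

lemma cscalar_prod_minus_left:
  "(w :: complex vec) \<in> carrier_vec d \<Longrightarrow> x \<in> carrier_vec d \<Longrightarrow> y \<in> carrier_vec d \<Longrightarrow>
   (x - y) \<bullet>c w = x \<bullet>c w - y \<bullet>c w"
  by (simp add: cscalar_prod_sum sum_subtractf algebra_simps)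

lemma cscalar_prod_adj:
  assumes A: "A \<in> carrier_mat d d" and v: "v \<in> carrier_vec d" and w: "w \<in> carrier_vec d"
  shows "(A *\<^sub>v v) \<bullet>c w = v \<bullet>c (adj A *\<^sub>v w)"
proof -
  have Aw: "adj A *\<^sub>v w \<in> carrier_vec d" by (rule mult_mat_vec_carrier[OF adj_carrier_mat[OF A] w])
  have "(A *\<^sub>v v) \<bullet>c w = (\<Sum>i<d. \<Sum>j<d. v $ j * (A $$ (i,j) * cnj (w $ i)))"
    using A v w by (simp add: cscalar_prod_sum row_scalar_prod_sum sum_distrib_left sum_distrib_right mult_ac)
  also have "\<dots> = (\<Sum>j<d. v $ j * cnj ((adj A *\<^sub>v w) $ j))"
    using A w by (subst sum.swap)
      (simp add: row_scalar_prod_sum[OF adj_carrier_mat[OF A] w] sum_distrib_left mult_ac)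
  also have "\<dots> = v \<bullet>c (adj A *\<^sub>v w)" by (rule cscalar_prod_sum[OF Aw, symmetric])
  finally show ?thesis .
qed

lemma hermitian_cscalar_prod:
  "hermitian_mat d A \<Longrightarrow> v \<in> carrier_vec d \<Longrightarrow> w \<in> carrier_vec d \<Longrightarrow> (A *\<^sub>v v) \<bullet>c w = v \<bullet>c (A *\<^sub>v w)"
  unfolding hermitian_mat_def by (metis cscalar_prod_adj)

lemma smult_mat_mult_mat_vec:
  "(A :: complex mat) \<in> carrier_mat d d \<Longrightarrow> v \<in> carrier_vec d \<Longrightarrow> (c \<cdot>\<^sub>m A) *\<^sub>v v = c \<cdot>\<^sub>v (A *\<^sub>v v)"
  by (intro eq_vecI) (auto simp: row_scalar_prod_sum sum_distrib_left mult_ac)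

lemma mtrace_mult_comm:
  assumes A: "(A :: complex mat) \<in> carrier_mat d d" and B: "B \<in> carrier_mat d d"
  shows "mtrace (A * B) = mtrace (B * A)"
proof -
  have "mtrace (A * B) = (\<Sum>i<d. \<Sum>c<d. A $$ (i,c) * B $$ (c,i))"
    unfolding mtrace_def using A B by (intro sum.cong) (auto simp: row_col_scalar_prod_sum)
  also have "\<dots> = (\<Sum>c<d. \<Sum>i<d. B $$ (c,i) * A $$ (i,c))"
    by (subst sum.swap) (simp add: mult.commute)
  also have "\<dots> = mtrace (B * A)"
    unfolding mtrace_def using A B by (intro sum.cong) (auto simp: row_col_scalar_prod_sum)
  finally show ?thesis .
qed

definition vec_norm :: "nat \<Rightarrow> complex vec \<Rightarrow> real" where
  "vec_norm d v = L2_set (\<lambda>i. cmod (v $ i)) {..<d}"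

lemma vec_norm_nonneg: "vec_norm d v \<ge> 0"
  by (simp add: vec_norm_def L2_set_nonneg)

lemma vec_norm_power2: "(vec_norm d v)\<^sup>2 = (\<Sum>i<d. (cmod (v $ i))\<^sup>2)"
  by (simp add: vec_norm_def L2_set_def sum_nonneg)

lemma cscalar_prod_self: "(v :: complex vec) \<in> carrier_vec d \<Longrightarrow> v \<bullet>c v = of_real ((vec_norm d v)\<^sup>2)"
  unfolding cscalar_prod_sum vec_norm_power2 of_real_sum by (metis complex_norm_square)

lemma vec_norm_pos:
  assumes "(v :: complex vec) \<in> carrier_vec d" "v \<noteq> 0\<^sub>v d"
  shows "vec_norm d v > 0"
proof -
  obtain i where i: "i < d" "v $ i \<noteq> 0"
    using assms by (metis carrier_vecD eq_vecI index_zero_vec(1,2))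
  have "(cmod (v $ i))\<^sup>2 \<le> (vec_norm d v)\<^sup>2"
    unfolding vec_norm_power2 by (rule member_le_sum) (use i in auto)
  moreover have "(cmod (v $ i))\<^sup>2 > 0" using i by simp
  ultimately have "(vec_norm d v)\<^sup>2 > 0" by linarith
  then show ?thesis using vec_norm_nonneg[of d v] by (cases "vec_norm d v = 0") auto
qed

lemma vec_norm_triangle:
  assumes "x \<in> carrier_vec d" "y \<in> carrier_vec d"
  shows "vec_norm d (x + y) \<le> vec_norm d x + vec_norm d y"
proof -
  have "vec_norm d (x + y) = L2_set (\<lambda>i. cmod (x $ i + y $ i)) {..<d}"
    unfolding vec_norm_def using assms by (intro L2_set_cong) auto
  also have "\<dots> \<le> L2_set (\<lambda>i. cmod (x $ i) + cmod (y $ i)) {..<d}"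
    by (rule L2_set_mono) (auto intro: norm_triangle_ineq)
  also have "\<dots> \<le> vec_norm d x + vec_norm d y"
    unfolding vec_norm_def by (rule L2_set_triangle_ineq)
  finally show ?thesis .
qed

lemma unitary_vec_norm:
  assumes Q: "Q \<in> carrier_mat d d" and QQ: "adj Q * Q = 1\<^sub>m d" and v: "v \<in> carrier_vec d"
  shows "vec_norm d (Q *\<^sub>v v) = vec_norm d v"
proof -
  have Qv: "Q *\<^sub>v v \<in> carrier_vec d" using Q v by simp
  have "(Q *\<^sub>v v) \<bullet>c (Q *\<^sub>v v) = v \<bullet>c ((adj Q * Q) *\<^sub>v v)"
    using cscalar_prod_adj[OF Q v Qv] assoc_mult_mat_vec[OF adj_carrier_mat[OF Q] Q v] by simp
  also have "\<dots> = v \<bullet>c v" using QQ v by simp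
  finally have "complex_of_real ((vec_norm d (Q *\<^sub>v v))\<^sup>2) = complex_of_real ((vec_norm d v)\<^sup>2)"
    unfolding cscalar_prod_self[OF Qv] cscalar_prod_self[OF v] .
  then have "(vec_norm d (Q *\<^sub>v v))\<^sup>2 = (vec_norm d v)\<^sup>2" by (simp only: of_real_eq_iff)
  then show ?thesis by (simp add: vec_norm_nonneg power2_eq_iff_nonneg)
qed

section \<open>Orthonormal systems\<close>

definition orthonormal_system :: "nat \<Rightarrow> nat \<Rightarrow> (nat \<Rightarrow> complex vec) \<Rightarrow> bool" where
  "orthonormal_system d k u \<longleftrightarrow> (\<forall>i<k. u i \<in> carrier_vec d)
     \<and> (\<forall>i<k. \<forall>j<k. u i \<bullet>c u j = (if i = j then 1 else 0))"

lemma orthonormal_system_vec_norm: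
  assumes "orthonormal_system d k u" "i < k"
  shows "vec_norm d (u i) = 1"
proof -
  have "u i \<in> carrier_vec d" "u i \<bullet>c u i = 1" using assms by (simp_all add: orthonormal_system_def)
  then have "(vec_norm d (u i))\<^sup>2 = 1" using cscalar_prod_self by (metis of_real_eq_1_iff)
  then show ?thesis using vec_norm_nonneg[of d "u i"] by (simp add: power2_eq_1_iff)
qed

lemma orthonormal_basis_completeness:
  fixes u :: "nat \<Rightarrow> complex vec"
  assumes u: "orthonormal_system d d u" and "a < d" "b < d"
  shows "(\<Sum>k<d. u k $ a * cnj (u k $ b)) = (if a = b then 1 else 0)"
proof -
  define M where "M = mat d d (\<lambda>(a,k). u k $ a)"
  have M: "M \<in> carrier_mat d d" by (simp add: M_def)
  have "adj M * M = 1\<^sub>m d"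
  proof (rule eq_matI)
    fix j k assume jk: "j < dim_row (1\<^sub>m d)" "k < dim_col (1\<^sub>m d)"
    have "(adj M * M) $$ (j,k) = (\<Sum>a<d. adj M $$ (j,a) * M $$ (a,k))"
      using jk M by (intro index_mult_mat_sum) auto
    also have "\<dots> = (\<Sum>a<d. u k $ a * cnj (u j $ a))"
      using jk by (simp add: M_def mult.commute)
    also have "\<dots> = 1\<^sub>m d $$ (j,k)"
      using u jk cscalar_prod_sum[of "u j" d "u k"] by (auto simp: orthonormal_system_def)
    finally show "(adj M * M) $$ (j,k) = 1\<^sub>m d $$ (j,k)" .
  qed (use M in simp_all)
  then have "M * adj M = 1\<^sub>m d"
    using mat_mult_left_right_inverse[OF adj_carrier_mat[OF M] M] by blast
  then have "(M * adj M) $$ (a,b) = (if a = b then 1 else 0)" using assms(2,3) by simp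
  moreover have "(M * adj M) $$ (a,b) = (\<Sum>k<d. M $$ (a,k) * adj M $$ (k,b))"
    by (rule index_mult_mat_sum[OF M adj_carrier_mat[OF M] assms(2,3)])
  moreover have "\<dots> = (\<Sum>k<d. u k $ a * cnj (u k $ b))"
    using M assms(2,3) by (simp add: M_def)
  ultimately show ?thesis by simp
qed

lemma orthonormal_basis_expansion:
  fixes u :: "nat \<Rightarrow> complex vec"
  assumes u: "orthonormal_system d d u" and z: "z \<in> carrier_vec d" and i: "i < d"
  shows "z $ i = (\<Sum>l<d. (z \<bullet>c u l) * u l $ i)"
proof -
  have uc: "u l \<in> carrier_vec d" if "l < d" for l using u that by (simp add: orthonormal_system_def)
  have "(\<Sum>l<d. (z \<bullet>c u l) * u l $ i) = (\<Sum>l<d. \<Sum>j<d. z $ j * (u l $ i * cnj (u l $ j)))"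
    by (intro sum.cong refl) (simp add: uc cscalar_prod_sum[of _ d] sum_distrib_left sum_distrib_right mult_ac)
  also have "\<dots> = (\<Sum>j<d. z $ j * (\<Sum>l<d. u l $ i * cnj (u l $ j)))"
    by (subst sum.swap) (simp add: sum_distrib_left)
  also have "\<dots> = (\<Sum>j<d. z $ j * (if i = j then 1 else 0))"
    using orthonormal_basis_completeness[OF u i] by (intro sum.cong) auto
  also have "\<dots> = z $ i" using i by (simp add: if_distrib cong: if_cong)
  finally show ?thesis by simp
qed

lemma orthonormal_basis_parseval:
  assumes u: "orthonormal_system d d u" and z: "z \<in> carrier_vec d"
  shows "(vec_norm d z)\<^sup>2 = (\<Sum>l<d. (cmod (z \<bullet>c u l))\<^sup>2)"
proof -
  have uc: "u l \<in> carrier_vec d" if "l < d" for l using u that by (simp add: orthonormal_system_def)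
  have "complex_of_real ((vec_norm d z)\<^sup>2) = (\<Sum>i<d. z $ i * cnj (z $ i))"
    unfolding cscalar_prod_self[OF z, symmetric] by (rule cscalar_prod_sum[OF z])
  also have "\<dots> = (\<Sum>i<d. z $ i * cnj (\<Sum>l<d. (z \<bullet>c u l) * u l $ i))"
    using orthonormal_basis_expansion[OF u z] by (intro sum.cong refl) simp
  also have "\<dots> = (\<Sum>l<d. cnj (z \<bullet>c u l) * (\<Sum>i<d. z $ i * cnj (u l $ i)))"
    by (simp add: sum_distrib_left sum_distrib_right mult_ac) (rule sum.swap)
  also have "\<dots> = (\<Sum>l<d. cnj (z \<bullet>c u l) * (z \<bullet>c u l))"
    by (intro sum.cong refl) (simp add: uc cscalar_prod_sum[of _ d])
  also have "\<dots> = (\<Sum>l<d. complex_of_real ((cmod (z \<bullet>c u l))\<^sup>2))"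
    by (intro sum.cong refl) (metis complex_norm_square mult.commute)
  finally show ?thesis by (simp only: of_real_sum[symmetric] of_real_eq_iff)
qed

lemma exists_nonzero_orthogonal_vec:
  fixes u :: "nat \<Rightarrow> complex vec"
  assumes k: "k < d" and u: "\<forall>i<k. u i \<in> carrier_vec d"
  shows "\<exists>w \<in> carrier_vec d. w \<noteq> 0\<^sub>v d \<and> (\<forall>i<k. u i \<bullet>c w = 0)"
proof -
  \<comment> \<open>\<open>M\<close> is singular since its last row is zero; its rows \<open>i < k\<close> are the conjugates of the \<open>u i\<close>.\<close>
  define c where "c = (\<lambda>i. if i < k then vec d (\<lambda>j. cnj (u i $ j)) else 0\<^sub>v d)"
  define M where "M = mat\<^sub>r d d (\<lambda>i. if i = d - 1 then 0\<^sub>v d else c i)"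
  have "det M = 0" unfolding M_def
    by (rule det_row_0) (use k in \<open>auto simp: c_def\<close>)
  moreover have M: "M \<in> carrier_mat d d" unfolding M_def by (rule mat_row_carrierI)
  ultimately obtain v where v: "v \<in> carrier_vec d" "v \<noteq> 0\<^sub>v d" "M *\<^sub>v v = 0\<^sub>v d"
    using det_0_iff_vec_prod_zero[OF M] by blast
  have "u i \<bullet>c v = 0" if i: "i < k" for i
  proof -
    have id: "i \<noteq> d - 1" "i < d" using i k by linarith+
    have "row M i \<bullet> v = 0" using v M id by (metis index_mult_mat_vec index_zero_vec(1) carrier_matD(1))
    then have "(\<Sum>j<d. cnj (u i $ j) * v $ j) = 0"
      using v id i by (simp add: M_def c_def scalar_prod_def atLeast0LessThan)
    moreover have "u i \<bullet>c v = cnj (\<Sum>j<d. cnj (u i $ j) * v $ j)"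
      using v by (simp add: cscalar_prod_sum mult.commute)
    ultimately show ?thesis by simp
  qed
  then show ?thesis using v by blast
qed

lemma exists_unit_multiple:
  assumes "(w :: complex vec) \<in> carrier_vec d" "w \<noteq> 0\<^sub>v d"
  shows "\<exists>r :: real. r > 0 \<and> (of_real r \<cdot>\<^sub>v w) \<bullet>c (of_real r \<cdot>\<^sub>v w) = 1"
proof -
  define r where "r = 1 / vec_norm d w"
  have n: "vec_norm d w > 0" by (rule vec_norm_pos[OF assms])
  have rw: "of_real r \<cdot>\<^sub>v w \<in> carrier_vec d" using assms(1) by simp
  have "(of_real r \<cdot>\<^sub>v w) \<bullet>c (of_real r \<cdot>\<^sub>v w) = of_real r * (cnj (of_real r) * (w \<bullet>c w))"
    unfolding cscalar_prod_smult_left[OF rw assms(1)] cscalar_prod_smult_right[OF assms(1), of w] ..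
  also have "\<dots> = of_real (r * r * (vec_norm d w)\<^sup>2)"
    by (simp add: cscalar_prod_self[OF assms(1)])
  also have "r * r * (vec_norm d w)\<^sup>2 = 1" using n by (simp add: r_def power2_eq_square)
  finally have "(of_real r \<cdot>\<^sub>v w) \<bullet>c (of_real r \<cdot>\<^sub>v w) = 1" by simp
  moreover have "r > 0" using n by (simp add: r_def)
  ultimately show ?thesis by blast
qed

lemma orthonormal_system_upd:
  assumes u: "orthonormal_system d k u" and w: "w \<in> carrier_vec d" "w \<bullet>c w = 1"
    and perp: "\<forall>i<k. w \<bullet>c u i = 0"
  shows "orthonormal_system d (Suc k) (u(k := w))"
proof -
  have "u i \<bullet>c w = 0" if "i < k" for i
    using u w perp that cscalar_prod_swap[of "u i" d w] by (simp add: orthonormal_system_def)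
  then show ?thesis using u w perp by (auto simp: orthonormal_system_def less_Suc_eq)
qed

lemma orthonormal_system_extend:
  assumes "k < d" "orthonormal_system d k u"
  shows "\<exists>w. orthonormal_system d (Suc k) (u(k := w))"
proof -
  have uc: "\<forall>i<k. u i \<in> carrier_vec d" using assms(2) by (simp add: orthonormal_system_def)
  obtain w where w: "w \<in> carrier_vec d" "w \<noteq> 0\<^sub>v d" "\<forall>i<k. u i \<bullet>c w = 0"
    using exists_nonzero_orthogonal_vec[OF assms(1) uc] by blast
  obtain r where r: "(of_real r \<cdot>\<^sub>v w) \<bullet>c (of_real r \<cdot>\<^sub>v w) = 1"
    using exists_unit_multiple[OF w(1,2)] by blast
  have perp: "\<forall>i<k. (of_real r \<cdot>\<^sub>v w) \<bullet>c u i = 0"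
    using w uc cscalar_prod_swap[of _ d w] by (simp add: cscalar_prod_smult_left[of _ d])
  have "of_real r \<cdot>\<^sub>v w \<in> carrier_vec d" using w(1) by simp
  then show ?thesis using orthonormal_system_upd[OF assms(2) _ r perp] by blast
qed

lemma orthonormal_system_extends_to_basis:
  assumes "k \<le> d" "orthonormal_system d k u"
  shows "\<exists>b. orthonormal_system d d b \<and> (\<forall>i<k. b i = u i)"
  using assms
proof (induction "d - k" arbitrary: k u)
  case 0
  then show ?case by auto
next
  case (Suc m)
  have "k < d" using Suc.hyps(2) by arith
  then obtain w where "orthonormal_system d (Suc k) (u(k := w))"
    using orthonormal_system_extend[of k d u] Suc.prems by blast
  moreover have "Suc k \<le> d" "m = d - Suc k" using Suc.hyps(2) by arith+
  ultimately obtain b where "orthonormal_system d d b" "\<forall>i<Suc k. b i = (u(k := w)) i"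
    using Suc.hyps(1) by blast
  then show ?case by auto
qed

section \<open>The spectral theorem for Hermitian matrices\<close>

definition vec_lincomb :: "nat \<Rightarrow> nat \<Rightarrow> (nat \<Rightarrow> complex) \<Rightarrow> (nat \<Rightarrow> complex vec) \<Rightarrow> complex vec" where
  "vec_lincomb d m c v = vec d (\<lambda>i. \<Sum>q<m. c q * v q $ i)"

lemma vec_lincomb_carrier [simp]: "vec_lincomb d m c v \<in> carrier_vec d"
  by (simp add: vec_lincomb_def)

lemma cscalar_prod_vec_lincomb:
  assumes "w \<in> carrier_vec d"
  shows "vec_lincomb d m c v \<bullet>c w = (\<Sum>q<m. c q * (v q \<bullet>c w))"
proof -
  have "vec_lincomb d m c v \<bullet>c w = (\<Sum>i<d. \<Sum>q<m. c q * (v q $ i * cnj (w $ i)))"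
    using assms by (simp add: cscalar_prod_sum vec_lincomb_def sum_distrib_left sum_distrib_right mult_ac)
  also have "\<dots> = (\<Sum>q<m. c q * (v q \<bullet>c w))"
    using assms by (subst sum.swap) (simp add: cscalar_prod_sum sum_distrib_left)
  finally show ?thesis .
qed

lemma hermitian_eigenvalue_real:
  assumes A: "hermitian_mat d A" and v: "v \<in> carrier_vec d" "v \<noteq> 0\<^sub>v d" and Av: "A *\<^sub>v v = a \<cdot>\<^sub>v v"
  shows "a = of_real (Re a)"
proof -
  have "a * (v \<bullet>c v) = cnj a * (v \<bullet>c v)"
    using hermitian_cscalar_prod[OF A v(1) v(1)] v(1)
    by (simp add: Av cscalar_prod_smult_left cscalar_prod_smult_right)
  moreover have "v \<bullet>c v \<noteq> 0"
    using cscalar_prod_self[OF v(1)] vec_norm_pos[OF v] by simp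
  ultimately have "cnj a = a" by simp
  then show ?thesis by (metis Reals_cnj_iff of_real_Re)
qed

lemma hermitian_orthogonal_eigenvector_invariant:
  assumes A: "hermitian_mat d A" and w: "w \<in> carrier_vec d" "A *\<^sub>v w = of_real \<mu> \<cdot>\<^sub>v w"
    and x: "x \<in> carrier_vec d" "x \<bullet>c w = 0"
  shows "(A *\<^sub>v x) \<bullet>c w = 0"
  using hermitian_cscalar_prod[OF A x(1) w(1)] x w by (simp add: cscalar_prod_smult_right)

lemma exists_eigenvector:
  assumes A: "(A :: complex mat) \<in> carrier_mat m m" and m: "0 < m"
  shows "\<exists>a y. y \<in> carrier_vec m \<and> y \<noteq> 0\<^sub>v m \<and> A *\<^sub>v y = a \<cdot>\<^sub>v y"
proof -
  obtain as where "char_poly A = (\<Prod>a\<leftarrow>as. [:- a, 1:])" "length as = m"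
    using char_poly_factorized[OF A] by blast
  with m obtain a where "poly (char_poly A) a = 0" by (cases as) auto
  then show ?thesis
    using eigenvalue_root_char_poly[OF A] A unfolding eigenvalue_def eigenvector_def by auto
qed

lemma orthonormal_basis_eigenvectorI:
  assumes b: "orthonormal_system d d b" and A: "A \<in> carrier_mat d d" and x: "x \<in> carrier_vec d"
    and coeff: "\<forall>l<d. (A *\<^sub>v x) \<bullet>c b l = a * (x \<bullet>c b l)"
  shows "A *\<^sub>v x = a \<cdot>\<^sub>v x"
proof (rule eq_vecI)
  fix i assume "i < dim_vec (a \<cdot>\<^sub>v x)"
  then have i: "i < d" using x by simp
  have "(A *\<^sub>v x) $ i = (\<Sum>l<d. (a * (x \<bullet>c b l)) * b l $ i)"
    using orthonormal_basis_expansion[OF b _ i, of "A *\<^sub>v x"] A x coeff by simp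
  also have "\<dots> = a * x $ i"
    using orthonormal_basis_expansion[OF b x i] by (simp add: sum_distrib_left mult.assoc)
  finally show "(A *\<^sub>v x) $ i = (a \<cdot>\<^sub>v x) $ i" using i x by simp
qed (use A x in simp)

text \<open>An eigenvector of the compression of \<open>A\<close> to the span of \<open>b k, \<dots>, b (d - 1)\<close>
  is an eigenvector of \<open>A\<close>, since that span is invariant.\<close>

lemma hermitian_eigenvector_in_complement:
  assumes A: "hermitian_mat d A" and k: "k < d" and b: "orthonormal_system d d b"
    and eig: "\<forall>i<k. A *\<^sub>v b i = of_real (lam i) \<cdot>\<^sub>v b i"
  shows "\<exists>x a. x \<in> carrier_vec d \<and> x \<noteq> 0\<^sub>v d \<and> A *\<^sub>v x = a \<cdot>\<^sub>v x \<and> (\<forall>i<k. x \<bullet>c b i = 0)"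
proof -
  have Ac: "A \<in> carrier_mat d d" using A by (simp add: hermitian_mat_def)
  have bc: "\<And>l. l < d \<Longrightarrow> b l \<in> carrier_vec d"
    and bo: "\<And>j l. j < d \<Longrightarrow> l < d \<Longrightarrow> b j \<bullet>c b l = (if j = l then 1 else 0)"
    using b by (simp_all add: orthonormal_system_def)
  define m where "m = d - k"
  have m: "0 < m" "k + m = d" using k by (auto simp: m_def)
  define Ar where "Ar = mat m m (\<lambda>(p,q). b (k+q) \<bullet>c (A *\<^sub>v b (k+p)))"
  have Ar: "Ar \<in> carrier_mat m m" by (simp add: Ar_def)
  obtain a y where y: "y \<in> carrier_vec m" "y \<noteq> 0\<^sub>v m" "Ar *\<^sub>v y = a \<cdot>\<^sub>v y"
    using exists_eigenvector[OF Ar m(1)] by blast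
  define x where "x = vec_lincomb d m (\<lambda>q. y $ q) (\<lambda>q. b (k+q))"
  have xc: "x \<in> carrier_vec d" by (simp add: x_def)
  have x_low: "x \<bullet>c b l = 0" if "l < k" for l
    using that m by (simp add: x_def cscalar_prod_vec_lincomb bc bo)
  have x_high: "x \<bullet>c b (k+p) = y $ p" if "p < m" for p
    using that m by (simp add: x_def cscalar_prod_vec_lincomb bc bo if_distrib cong: if_cong)
  have Ax_coeff: "(A *\<^sub>v x) \<bullet>c b l = a * (x \<bullet>c b l)" if l: "l < d" for l
  proof (cases "l < k")
    case True
    then show ?thesis
      using hermitian_orthogonal_eigenvector_invariant[OF A bc[OF l] _ xc x_low] eig x_low by simp
  next
    case False
    then obtain p where p: "p < m" "l = k + p" using l m by (metis add_diff_inverse_nat add_less_imp_less_left)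
    have "(A *\<^sub>v x) \<bullet>c b (k+p) = (\<Sum>q<m. y $ q * (b (k+q) \<bullet>c (A *\<^sub>v b (k+p))))"
      using hermitian_cscalar_prod[OF A xc bc] l p Ac bc
      by (simp add: x_def cscalar_prod_vec_lincomb)
    also have "\<dots> = (Ar *\<^sub>v y) $ p"
      using p y(1) by (simp add: Ar_def scalar_prod_def atLeast0LessThan mult.commute)
    finally show ?thesis using p y x_high by simp
  qed
  have "A *\<^sub>v x = a \<cdot>\<^sub>v x" using orthonormal_basis_eigenvectorI[OF b Ac xc] Ax_coeff by blast
  moreover have "x \<noteq> 0\<^sub>v d"
  proof
    assume x0: "x = 0\<^sub>v d"
    obtain p where p: "p < m" "y $ p \<noteq> 0"
      using y(1,2) by (metis carrier_vecD eq_vecI index_zero_vec(1,2))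
    have "y $ p = 0\<^sub>v d \<bullet>c b (k+p)" using x_high[OF p(1)] x0 by simp
    also have "\<dots> = 0" using bc[of "k+p"] p(1) m by (simp add: cscalar_prod_sum[of _ d])
    finally show False using p(2) by simp
  qed
  ultimately show ?thesis using xc x_low by blast
qed

lemma hermitian_orthogonal_unit_eigenvector:
  assumes A: "hermitian_mat d A" and k: "k < d" and u: "orthonormal_system d k u"
    and eig: "\<forall>i<k. A *\<^sub>v u i = of_real (lam i) \<cdot>\<^sub>v u i"
  shows "\<exists>x \<mu>. x \<in> carrier_vec d \<and> A *\<^sub>v x = of_real \<mu> \<cdot>\<^sub>v x \<and> x \<bullet>c x = 1 \<and> (\<forall>i<k. x \<bullet>c u i = 0)"
proof -
  have Ac: "A \<in> carrier_mat d d" using A by (simp add: hermitian_mat_def)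
  obtain b where b: "orthonormal_system d d b" and bu: "\<forall>i<k. b i = u i"
    using orthonormal_system_extends_to_basis[of k d u] k u by auto
  have "\<forall>i<k. A *\<^sub>v b i = of_real (lam i) \<cdot>\<^sub>v b i" using eig bu by simp
  then obtain x a where x: "x \<in> carrier_vec d" "x \<noteq> 0\<^sub>v d" "A *\<^sub>v x = a \<cdot>\<^sub>v x" "\<forall>i<k. x \<bullet>c b i = 0"
    using hermitian_eigenvector_in_complement[OF A k b] by blast
  obtain r where r: "(of_real r \<cdot>\<^sub>v x) \<bullet>c (of_real r \<cdot>\<^sub>v x) = 1"
    using exists_unit_multiple[OF x(1,2)] by blast
  have "A *\<^sub>v (of_real r \<cdot>\<^sub>v x) = of_real (Re a) \<cdot>\<^sub>v (of_real r \<cdot>\<^sub>v x)"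
    using mult_mat_vec[OF Ac x(1)] x(1) hermitian_eigenvalue_real[OF A x(1-3)]
    by (auto simp: x(3) smult_smult_assoc mult.commute)
  moreover have "\<forall>i<k. (of_real r \<cdot>\<^sub>v x) \<bullet>c u i = 0"
  proof (intro allI impI)
    fix i assume "i < k"
    then have "u i \<in> carrier_vec d" "x \<bullet>c u i = 0" using u bu x(4) by (auto simp: orthonormal_system_def)
    then show "(of_real r \<cdot>\<^sub>v x) \<bullet>c u i = 0" using x(1) by (simp add: cscalar_prod_smult_left)
  qed
  ultimately show ?thesis using x(1) r by (intro exI[of _ "of_real r \<cdot>\<^sub>v x"] exI[of _ "Re a"]) auto
qed

lemma hermitian_orthonormal_eigenvectors:
  assumes A: "hermitian_mat d A"
  shows "k \<le> d \<Longrightarrow> \<exists>u lam. orthonormal_system d k u \<and> (\<forall>i<k. A *\<^sub>v u i = of_real (lam i) \<cdot>\<^sub>v u i)"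
proof (induction k)
  case 0
  show ?case by (auto simp: orthonormal_system_def)
next
  case (Suc k)
  then obtain u lam where u: "orthonormal_system d k u" "\<forall>i<k. A *\<^sub>v u i = of_real (lam i) \<cdot>\<^sub>v u i"
    by auto
  obtain x \<mu> where x: "x \<in> carrier_vec d" "A *\<^sub>v x = of_real \<mu> \<cdot>\<^sub>v x" "x \<bullet>c x = 1" "\<forall>i<k. x \<bullet>c u i = 0"
    using hermitian_orthogonal_unit_eigenvector[OF A _ u] Suc.prems by auto
  have "orthonormal_system d (Suc k) (u(k := x))"
    by (rule orthonormal_system_upd[OF u(1) x(1,3,4)])
  moreover have "\<forall>i<Suc k. A *\<^sub>v (u(k := x)) i = of_real ((lam(k := \<mu>)) i) \<cdot>\<^sub>v (u(k := x)) i"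
    using u(2) x(2) by (auto simp: less_Suc_eq)
  ultimately show ?case by blast
qed

lemma hermitian_eigenbasis:
  "hermitian_mat d A \<Longrightarrow> \<exists>u lam. orthonormal_system d d u \<and> (\<forall>i<d. A *\<^sub>v u i = of_real (lam i) \<cdot>\<^sub>v u i)"
  using hermitian_orthonormal_eigenvectors by blast

lemma eigenbasis_expansion:
  assumes A: "(A :: complex mat) \<in> carrier_mat d d" and u: "orthonormal_system d d u"
    and eig: "\<forall>i<d. A *\<^sub>v u i = \<mu> i \<cdot>\<^sub>v u i" and ab: "a < d" "b < d"
  shows "A $$ (a,b) = (\<Sum>k<d. \<mu> k * u k $ a * cnj (u k $ b))"
proof -
  have uc: "u l \<in> carrier_vec d" if "l < d" for l using u that by (simp add: orthonormal_system_def)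
  have "A $$ (a,b) = (\<Sum>c<d. A $$ (a,c) * (if c = b then 1 else 0))"
    using ab by (simp add: if_distrib cong: if_cong)
  also have "\<dots> = (\<Sum>c<d. A $$ (a,c) * (\<Sum>k<d. u k $ c * cnj (u k $ b)))"
    using orthonormal_basis_completeness[OF u _ ab(2)] by (intro sum.cong refl) simp
  also have "\<dots> = (\<Sum>k<d. cnj (u k $ b) * (\<Sum>c<d. A $$ (a,c) * u k $ c))"
    by (simp add: sum_distrib_left sum_distrib_right mult_ac) (rule sum.swap)
  also have "\<dots> = (\<Sum>k<d. cnj (u k $ b) * (A *\<^sub>v u k) $ a)"
    using A ab by (intro sum.cong refl) (simp add: row_scalar_prod_sum uc)
  also have "\<dots> = (\<Sum>k<d. \<mu> k * u k $ a * cnj (u k $ b))"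
    using eig ab by (intro sum.cong refl) (simp add: mult_ac carrier_vecD[OF uc])
  finally show ?thesis .
qed

lemma eigenbasis_expansion_mult_vec:
  assumes u: "orthonormal_system d d u" and F: "F \<in> carrier_mat d d"
    and Fe: "\<forall>a<d. \<forall>b<d. F $$ (a,b) = (\<Sum>k<d. z k * u k $ a * cnj (u k $ b))" and j: "j < d"
  shows "F *\<^sub>v u j = z j \<cdot>\<^sub>v u j"
proof (rule eq_vecI)
  have uc: "u l \<in> carrier_vec d" if "l < d" for l using u that by (simp add: orthonormal_system_def)
  fix a assume "a < dim_vec (z j \<cdot>\<^sub>v u j)"
  then have a: "a < d" using uc[OF j] by simp
  have "(F *\<^sub>v u j) $ a = (\<Sum>b<d. \<Sum>k<d. z k * u k $ a * (u j $ b * cnj (u k $ b)))"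
    using F Fe a uc[OF j] by (simp add: row_scalar_prod_sum sum_distrib_left sum_distrib_right mult_ac)
  also have "\<dots> = (\<Sum>k<d. z k * u k $ a * (u j \<bullet>c u k))"
    using uc by (subst sum.swap) (simp add: cscalar_prod_sum[of _ d] sum_distrib_left)
  also have "\<dots> = (\<Sum>k<d. if k = j then z k * u k $ a else 0)"
    using u j by (intro sum.cong refl) (auto simp: orthonormal_system_def)
  also have "\<dots> = z j * u j $ a" using j by simp
  finally show "(F *\<^sub>v u j) $ a = (z j \<cdot>\<^sub>v u j) $ a" using a uc[OF j] by simp
qed (use F j u in \<open>auto simp: orthonormal_system_def\<close>)

lemma eigenbasis_expansion_unitary:
  assumes u: "orthonormal_system d d u" and F: "F \<in> carrier_mat d d"
    and Fe: "\<forall>a<d. \<forall>b<d. F $$ (a,b) = (\<Sum>k<d. z k * u k $ a * cnj (u k $ b))"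
    and z: "\<forall>k<d. z k * cnj (z k) = 1"
  shows "unitary_mat d F"
proof -
  have uc: "u l \<in> carrier_vec d" if "l < d" for l using u that by (simp add: orthonormal_system_def)
  have "adj F $$ (a,b) = (\<Sum>k<d. cnj (z k) * u k $ a * cnj (u k $ b))" if "a < d" "b < d" for a b
  proof -
    have "adj F $$ (a,b) = cnj (\<Sum>k<d. z k * u k $ b * cnj (u k $ a))" using F Fe that by simp
    then show ?thesis by (simp add: mult.commute mult.left_commute)
  qed
  then have adjF: "adj F *\<^sub>v u j = cnj (z j) \<cdot>\<^sub>v u j" if "j < d" for j
    using eigenbasis_expansion_mult_vec[OF u adj_carrier_mat[OF F] _ that, of "\<lambda>k. cnj (z k)"] by simp
  have eig1: "\<forall>j<d. (adj F * F) *\<^sub>v u j = 1 \<cdot>\<^sub>v u j"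
  proof (intro allI impI)
    fix j assume j: "j < d"
    have "(adj F * F) *\<^sub>v u j = adj F *\<^sub>v (z j \<cdot>\<^sub>v u j)"
      using assoc_mult_mat_vec[OF adj_carrier_mat[OF F] F uc[OF j]]
        eigenbasis_expansion_mult_vec[OF u F Fe j] by simp
    also have "\<dots> = (z j * cnj (z j)) \<cdot>\<^sub>v u j"
      using mult_mat_vec[OF adj_carrier_mat[OF F] uc[OF j]] adjF[OF j] by (simp add: smult_smult_assoc)
    finally show "(adj F * F) *\<^sub>v u j = 1 \<cdot>\<^sub>v u j" using z j by simp
  qed
  have "adj F * F = 1\<^sub>m d"
  proof (rule eq_matI)
    fix a b assume "a < dim_row (1\<^sub>m d)" "b < dim_col (1\<^sub>m d)"
    then have ab: "a < d" "b < d" by auto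
    have "(adj F * F) $$ (a,b) = (\<Sum>k<d. 1 * u k $ a * cnj (u k $ b))"
      by (rule eigenbasis_expansion[OF _ u _ ab]) (use F eig1 in auto)
    also have "\<dots> = 1\<^sub>m d $$ (a,b)" using orthonormal_basis_completeness[OF u ab] ab by simp
    finally show "(adj F * F) $$ (a,b) = 1\<^sub>m d $$ (a,b)" .
  qed (use F in auto)
  then show ?thesis
    using F mat_mult_left_right_inverse[OF adj_carrier_mat[OF F] F] by (simp add: unitary_mat_def)
qed

lemma pow_mat_eigenvector:
  assumes A: "(A :: complex mat) \<in> carrier_mat d d" and v: "v \<in> carrier_vec d"
    and Av: "A *\<^sub>v v = \<mu> \<cdot>\<^sub>v v"
  shows "(A ^\<^sub>m n) *\<^sub>v v = (\<mu> ^ n) \<cdot>\<^sub>v v"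
proof (induction n)
  case (Suc n)
  have "(A ^\<^sub>m Suc n) *\<^sub>v v = (A ^\<^sub>m n) *\<^sub>v (\<mu> \<cdot>\<^sub>v v)"
    using assoc_mult_mat_vec[OF pow_carrier_mat[OF A] A v] by (simp add: Av)
  also have "\<dots> = (\<mu> ^ Suc n) \<cdot>\<^sub>v v"
    using mult_mat_vec[OF pow_carrier_mat[OF A] v] Suc.IH by (simp add: smult_smult_assoc mult.commute)
  finally show ?case .
qed (use A v in simp)

lemma mat_exp_eigenbasis:
  assumes A: "(A :: complex mat) \<in> carrier_mat d d" and u: "orthonormal_system d d u"
    and eig: "\<forall>i<d. A *\<^sub>v u i = \<mu> i \<cdot>\<^sub>v u i" and ab: "a < d" "b < d"
  shows "mat_exp A $$ (a,b) = (\<Sum>k<d. exp (\<mu> k) * u k $ a * cnj (u k $ b))"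
proof -
  define w where "w k = u k $ a * cnj (u k $ b)" for k
  have "(A ^\<^sub>m n) $$ (a,b) = (\<Sum>k<d. \<mu> k ^ n * w k)" for n
    using eigenbasis_expansion[OF pow_carrier_mat[OF A] u _ ab] pow_mat_eigenvector[OF A] eig u
    by (simp add: w_def mult.assoc orthonormal_system_def)
  then have "mat_exp A $$ (a,b) = (\<Sum>n. \<Sum>k<d. \<mu> k ^ n /\<^sub>R fact n * w k)"
    using A ab by (simp add: mat_exp_def sum_divide_distrib scaleR_conv_of_real divide_inverse sum_distrib_left mult_ac)
  also have "\<dots> = (\<Sum>k<d. exp (\<mu> k) * w k)"
    by (rule sums_unique[symmetric], rule sums_sum, rule sums_mult2[OF exp_converges])
  finally show ?thesis by (simp add: w_def mult.assoc)
qed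

lemma density_mat_eigenbasis:
  assumes "density_mat d \<rho>"
  obtains u lam where "orthonormal_system d d u" "\<forall>k<d. lam k \<ge> 0" "(\<Sum>k<d. lam k) = 1"
    "\<forall>a<d. \<forall>b<d. \<rho> $$ (a,b) = (\<Sum>k<d. of_real (lam k) * u k $ a * cnj (u k $ b))"
proof -
  have herm: "hermitian_mat d \<rho>" and psd: "\<forall>v\<in>carrier_vec d. 0 \<le> Re ((\<rho> *\<^sub>v v) \<bullet>c v)"
    and tr: "mtrace \<rho> = 1" using assms by (auto simp: density_mat_def)
  have A: "\<rho> \<in> carrier_mat d d" using herm by (simp add: hermitian_mat_def)
  obtain u lam where u: "orthonormal_system d d u"
    and eig: "\<forall>i<d. \<rho> *\<^sub>v u i = of_real (lam i) \<cdot>\<^sub>v u i"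
    using hermitian_eigenbasis[OF herm] by blast
  have uc: "\<And>l. l < d \<Longrightarrow> u l \<in> carrier_vec d" and uu: "\<And>l. l < d \<Longrightarrow> u l \<bullet>c u l = 1"
    using u by (simp_all add: orthonormal_system_def)
  have dec: "\<forall>a<d. \<forall>b<d. \<rho> $$ (a,b) = (\<Sum>k<d. of_real (lam k) * u k $ a * cnj (u k $ b))"
    using eigenbasis_expansion[OF A u eig] by blast
  have "lam k \<ge> 0" if k: "k < d" for k
  proof -
    have "(\<rho> *\<^sub>v u k) \<bullet>c u k = of_real (lam k)"
      using eig k cscalar_prod_smult_left[OF uc[OF k] uc[OF k]] uu[OF k] by simp
    then show ?thesis using psd uc[OF k] by force
  qed
  moreover have "(\<Sum>k<d. lam k) = 1"
  proof -
    have "mtrace \<rho> = (\<Sum>a<d. \<Sum>k<d. of_real (lam k) * (u k $ a * cnj (u k $ a)))"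
      unfolding mtrace_def using A dec by (intro sum.cong) (auto simp: mult_ac)
    also have "\<dots> = (\<Sum>k<d. of_real (lam k) * (u k \<bullet>c u k))"
      by (subst sum.swap) (simp add: uc cscalar_prod_sum[of _ d] sum_distrib_left)
    finally have "mtrace \<rho> = (\<Sum>k<d. of_real (lam k) * (u k \<bullet>c u k))" .
    then have "of_real (\<Sum>k<d. lam k) = (1 :: complex)" using tr uu by simp
    then show ?thesis by (simp only: of_real_eq_1_iff)
  qed
  ultimately show ?thesis using that u dec by blast
qed

section \<open>The spectral gap bounds the spread of a Hermitian matrix\<close>

lemma finite_eigenvalues:
  assumes "(M :: complex mat) \<in> carrier_mat d d"
  shows "finite {k. eigenvalue M k}"
proof -
  have "char_poly M \<noteq> 0" using degree_monic_char_poly[OF assms] by auto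
  then show ?thesis using eigenvalue_root_char_poly[OF assms] poly_roots_finite by simp
qed

lemma Re_eigenvalue_imageI:
  assumes "(M :: complex mat) \<in> carrier_mat d d" "u \<in> carrier_vec d" "u \<bullet>c u = 1"
    "M *\<^sub>v u = of_real l \<cdot>\<^sub>v u"
  shows "l \<in> Re ` {k. eigenvalue M k}"
proof -
  have "u \<noteq> 0\<^sub>v d" using assms(2,3) by (auto simp: cscalar_prod_sum)
  then have "eigenvalue M (of_real l)"
    unfolding eigenvalue_def eigenvector_def using assms by auto
  then show ?thesis by force
qed

lemma hermitian_shift_norm_le:
  assumes A: "hermitian_mat d A" and u: "orthonormal_system d d u"
    and eig: "\<forall>i<d. A *\<^sub>v u i = of_real (lam i) \<cdot>\<^sub>v u i"
    and bnd: "\<forall>i<d. \<bar>lam i - c\<bar> \<le> r" and v: "v \<in> carrier_vec d"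
  shows "(vec_norm d (A *\<^sub>v v - of_real c \<cdot>\<^sub>v v))\<^sup>2 \<le> r\<^sup>2 * (vec_norm d v)\<^sup>2"
proof -
  have Ac: "A \<in> carrier_mat d d" using A by (simp add: hermitian_mat_def)
  have uc: "\<And>l. l < d \<Longrightarrow> u l \<in> carrier_vec d" using u by (simp add: orthonormal_system_def)
  define w where "w = A *\<^sub>v v - of_real c \<cdot>\<^sub>v v"
  have wc: "w \<in> carrier_vec d" using Ac v by (simp add: w_def)
  have wu: "w \<bullet>c u l = of_real (lam l - c) * (v \<bullet>c u l)" if l: "l < d" for l
    using hermitian_cscalar_prod[OF A v uc[OF l]] eig l Ac v uc[OF l]
    by (simp add: w_def cscalar_prod_minus_left cscalar_prod_smult_left cscalar_prod_smult_right
        algebra_simps)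
  have "(vec_norm d w)\<^sup>2 = (\<Sum>l<d. (lam l - c)\<^sup>2 * (cmod (v \<bullet>c u l))\<^sup>2)"
    using orthonormal_basis_parseval[OF u wc] wu by (simp add: norm_mult power_mult_distrib flip: of_real_diff)
  also have "\<dots> \<le> (\<Sum>l<d. r\<^sup>2 * (cmod (v \<bullet>c u l))\<^sup>2)"
  proof (intro sum_mono mult_right_mono)
    fix l assume "l \<in> {..<d}"
    then have "\<bar>lam l - c\<bar> \<le> r" using bnd by simp
    then have "\<bar>lam l - c\<bar>\<^sup>2 \<le> r\<^sup>2" by (rule power_mono) simp
    then show "(lam l - c)\<^sup>2 \<le> r\<^sup>2" by simp
  qed simp
  also have "\<dots> = r\<^sup>2 * (vec_norm d v)\<^sup>2"
    by (simp add: orthonormal_basis_parseval[OF u v] sum_distrib_left)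
  finally show ?thesis by (simp add: w_def)
qed

text \<open>The shift \<open>c\<close> is the midpoint between the extreme eigenvalues of \<open>G\<close>.\<close>

lemma spectral_gap_shift_bound:
  assumes G: "hermitian_mat d G" and d: "0 < d"
  shows "\<exists>c. \<forall>v\<in>carrier_vec d. vec_norm d (G *\<^sub>v v - of_real c \<cdot>\<^sub>v v) \<le> spectral_gap G / 2 * vec_norm d v"
proof -
  have Gc: "G \<in> carrier_mat d d" using G by (simp add: hermitian_mat_def)
  obtain u lam where u: "orthonormal_system d d u" and eig: "\<forall>i<d. G *\<^sub>v u i = of_real (lam i) \<cdot>\<^sub>v u i"
    using hermitian_eigenbasis[OF G] by blast
  define S where "S = Re ` {k. eigenvalue G k}"
  have fin: "finite S" unfolding S_def using finite_eigenvalues[OF Gc] by simp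
  have inS: "lam i \<in> S" if "i < d" for i
    unfolding S_def using u eig that by (intro Re_eigenvalue_imageI[OF Gc]) (auto simp: orthonormal_system_def)
  have bnd: "Min S \<le> lam i \<and> lam i \<le> Max S" if "i < d" for i
    using inS[OF that] fin by auto
  define c where "c = (Max S + Min S) / 2"
  define r where "r = (Max S - Min S) / 2"
  have r: "r \<ge> 0" "spectral_gap G / 2 = r"
    using bnd[OF d] by (auto simp: r_def spectral_gap_def S_def)
  have "\<forall>i<d. \<bar>lam i - c\<bar> \<le> r"
  proof (intro allI impI)
    fix i assume "i < d"
    then have "Min S \<le> lam i" "lam i \<le> Max S" using bnd by auto
    then show "\<bar>lam i - c\<bar> \<le> r" unfolding c_def r_def by (auto simp: abs_le_iff field_simps)
  qed
  then have "vec_norm d (G *\<^sub>v v - of_real c \<cdot>\<^sub>v v) \<le> r * vec_norm d v" if "v \<in> carrier_vec d" for v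
    using hermitian_shift_norm_le[OF G u eig _ that] r(1) vec_norm_nonneg[of d v]
    by (metis power2_le_imp_le power_mult_distrib mult_nonneg_nonneg)
  then show ?thesis using r(2) by auto
qed

section \<open>Derivatives of matrix-valued functions\<close>

lemma adj_mult:
  assumes "A \<in> carrier_mat n m" "B \<in> carrier_mat m l"
  shows "adj (A * B) = adj B * adj A"
proof (rule eq_matI)
  fix i j assume "i < dim_row (adj B * adj A)" "j < dim_col (adj B * adj A)"
  then have ij: "i < l" "j < n" using assms by auto
  have "(A * B) $$ (j,i) = (\<Sum>k<m. A $$ (j,k) * B $$ (k,i))"
    by (rule index_mult_mat_sum[OF assms ij(2,1)])
  then have "adj (A * B) $$ (i,j) = cnj (\<Sum>k<m. A $$ (j,k) * B $$ (k,i))"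
    using assms ij by simp
  also have "\<dots> = (\<Sum>k<m. adj B $$ (i,k) * adj A $$ (k,j))"
    using assms ij by (simp add: mult.commute)
  also have "\<dots> = (adj B * adj A) $$ (i,j)"
    using assms ij by (intro index_mult_mat_sum[symmetric]) auto
  finally show "adj (A * B) $$ (i,j) = (adj B * adj A) $$ (i,j)" .
qed (use assms in auto)

lemma adj_adj: "adj (adj A) = A"
  by (intro eq_matI) auto

definition has_mat_derivative :: "nat \<Rightarrow> (real \<Rightarrow> complex mat) \<Rightarrow> complex mat \<Rightarrow> real \<Rightarrow> bool" where
  "has_mat_derivative d F F' x \<longleftrightarrow>
     (\<forall>a<d. \<forall>b<d. ((\<lambda>y. F y $$ (a,b)) has_vector_derivative F' $$ (a,b)) (at x))"

lemma mderiv_carrier_mat [simp]: "mderiv d F x \<in> carrier_mat d d"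
  by (simp add: mderiv_def)

lemma has_mat_derivative_mderiv:
  "\<forall>a<d. \<forall>b<d. (\<lambda>y. F y $$ (a,b)) differentiable (at x) \<Longrightarrow> has_mat_derivative d F (mderiv d F x) x"
  unfolding has_mat_derivative_def mderiv_def by (simp add: vector_derivative_works)

lemma has_mat_derivative_unique:
  assumes "has_mat_derivative d F F1 x" "has_mat_derivative d F F2 x"
    "F1 \<in> carrier_mat d d" "F2 \<in> carrier_mat d d"
  shows "F1 = F2"
proof (rule eq_matI)
  fix i j assume "i < dim_row F2" "j < dim_col F2"
  then have "i < d" "j < d" using assms(4) by auto
  then show "F1 $$ (i,j) = F2 $$ (i,j)"
    using assms(1,2) unfolding has_mat_derivative_def by (meson vector_derivative_unique_at)
qed (use assms(3,4) in auto)

lemma has_mat_derivative_const: "has_mat_derivative d (\<lambda>y. C) (0\<^sub>m d d) x"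
  unfolding has_mat_derivative_def by simp

lemma has_mat_derivative_transform_within_open:
  assumes "has_mat_derivative d F F' x" "open X" "x \<in> X" "\<forall>y\<in>X. F y = G y"
  shows "has_mat_derivative d G F' x"
  unfolding has_mat_derivative_def
proof (intro allI impI)
  fix a b assume "a < d" "b < d"
  then have "((\<lambda>y. F y $$ (a,b)) has_vector_derivative F' $$ (a,b)) (at x)"
    using assms(1) by (simp add: has_mat_derivative_def)
  then show "((\<lambda>y. G y $$ (a,b)) has_vector_derivative F' $$ (a,b)) (at x)"
    by (rule has_vector_derivative_transform_within_open[OF _ assms(2,3)]) (use assms(4) in simp)
qed

lemma has_mat_derivative_mult:
  assumes X: "open X" "x \<in> X" and FG: "\<forall>y\<in>X. F y \<in> carrier_mat d d \<and> G y \<in> carrier_mat d d"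
    and F': "F' \<in> carrier_mat d d" and G': "G' \<in> carrier_mat d d"
    and dF: "has_mat_derivative d F F' x" and dG: "has_mat_derivative d G G' x"
  shows "has_mat_derivative d (\<lambda>y. F y * G y) (F' * G x + F x * G') x"
  unfolding has_mat_derivative_def
proof (intro allI impI)
  fix a b assume ab: "a < d" "b < d"
  have Fx: "F x \<in> carrier_mat d d" and Gx: "G x \<in> carrier_mat d d" using FG X by auto
  have der: "((\<lambda>y. \<Sum>c<d. F y $$ (a,c) * G y $$ (c,b)) has_vector_derivative
      (\<Sum>c<d. F x $$ (a,c) * G' $$ (c,b) + F' $$ (a,c) * G x $$ (c,b))) (at x)"
  proof (rule has_vector_derivative_sum)
    fix c assume "c \<in> {..<d}"
    then show "((\<lambda>y. F y $$ (a,c) * G y $$ (c,b)) has_vector_derivative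
        F x $$ (a,c) * G' $$ (c,b) + F' $$ (a,c) * G x $$ (c,b)) (at x)"
      using dF dG ab unfolding has_mat_derivative_def by (intro has_vector_derivative_mult) auto
  qed
  have "(F' * G x + F x * G') $$ (a,b) = (F' * G x) $$ (a,b) + (F x * G') $$ (a,b)"
    using Fx G' ab by simp
  also have "\<dots> = (\<Sum>c<d. F x $$ (a,c) * G' $$ (c,b) + F' $$ (a,c) * G x $$ (c,b))"
    using index_mult_mat_sum[OF F' Gx ab] index_mult_mat_sum[OF Fx G' ab] by (simp add: sum.distrib)
  finally have eq: "(F' * G x + F x * G') $$ (a,b) =
      (\<Sum>c<d. F x $$ (a,c) * G' $$ (c,b) + F' $$ (a,c) * G x $$ (c,b))" .
  show "((\<lambda>y. (F y * G y) $$ (a,b)) has_vector_derivative (F' * G x + F x * G') $$ (a,b)) (at x)"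
    unfolding eq
  proof (rule has_vector_derivative_transform_within_open[OF der X])
    fix y assume "y \<in> X"
    then show "(\<Sum>c<d. F y $$ (a,c) * G y $$ (c,b)) = (F y * G y) $$ (a,b)"
      using FG ab by (intro index_mult_mat_sum[symmetric]) auto
  qed
qed

lemma has_mat_derivative_adj:
  assumes X: "open X" "x \<in> X" and F: "\<forall>y\<in>X. F y \<in> carrier_mat d d"
    and F': "F' \<in> carrier_mat d d" and dF: "has_mat_derivative d F F' x"
  shows "has_mat_derivative d (\<lambda>y. adj (F y)) (adj F') x"
  unfolding has_mat_derivative_def
proof (intro allI impI)
  fix a b assume ab: "a < d" "b < d"
  have "((\<lambda>y. cnj (F y $$ (b,a))) has_vector_derivative cnj (F' $$ (b,a))) (at x)"
    using dF ab unfolding has_mat_derivative_def by (intro has_vector_derivative_cnj) auto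
  then have "((\<lambda>y. adj (F y) $$ (a,b)) has_vector_derivative cnj (F' $$ (b,a))) (at x)"
  proof (rule has_vector_derivative_transform_within_open[OF _ X])
    fix y assume "y \<in> X"
    then show "cnj (F y $$ (b,a)) = adj (F y) $$ (a,b)" using F ab by auto
  qed
  then show "((\<lambda>y. adj (F y) $$ (a,b)) has_vector_derivative adj F' $$ (a,b)) (at x)"
    using F' ab by simp
qed

text \<open>Differentiating \<open>F y * adj (F y) = 1\<close> shows that \<open>F' * adj F\<close> is anti-Hermitian.\<close>

lemma unitary_generator_hermitian:
  assumes X: "open X" "x \<in> X" and F: "\<forall>y\<in>X. unitary_mat d (F y)"
    and dF: "has_mat_derivative d F F' x" and F': "F' \<in> carrier_mat d d"
  shows "hermitian_mat d (\<i> \<cdot>\<^sub>m (F' * adj (F x)))"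
proof -
  have Fc: "\<forall>y\<in>X. F y \<in> carrier_mat d d" using F by (simp add: unitary_mat_def)
  have Fx: "F x \<in> carrier_mat d d" using Fc X by auto
  have "has_mat_derivative d (\<lambda>y. F y * adj (F y)) (F' * adj (F x) + F x * adj F') x"
    using has_mat_derivative_mult[OF X _ F' adj_carrier_mat[OF F'] dF has_mat_derivative_adj[OF X Fc F' dF]]
      Fc by auto
  moreover have "has_mat_derivative d (\<lambda>y. F y * adj (F y)) (0\<^sub>m d d) x"
    by (rule has_mat_derivative_transform_within_open[OF has_mat_derivative_const[of d "1\<^sub>m d"] X])
      (use F in \<open>simp add: unitary_mat_def\<close>)
  ultimately have z: "F' * adj (F x) + F x * adj F' = 0\<^sub>m d d"
    by (rule has_mat_derivative_unique) (use F' Fx in auto)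
  define P where "P = F' * adj (F x)"
  have P: "P \<in> carrier_mat d d" using F' Fx by (simp add: P_def)
  have anti: "adj P $$ (a,b) = - P $$ (a,b)" if "a < d" "b < d" for a b
  proof -
    have "adj P = F x * adj F'" unfolding P_def by (simp add: adj_mult[OF F' adj_carrier_mat[OF Fx]] adj_adj)
    then show ?thesis
      using arg_cong[OF z, of "\<lambda>M. M $$ (a,b)"] that F' Fx by (simp add: P_def add_eq_0_iff)
  qed
  have "adj (\<i> \<cdot>\<^sub>m P) = \<i> \<cdot>\<^sub>m P"
  proof (rule eq_matI)
    fix a b assume "a < dim_row (\<i> \<cdot>\<^sub>m P)" "b < dim_col (\<i> \<cdot>\<^sub>m P)"
    then have ab: "a < d" "b < d" using P by auto
    then show "adj (\<i> \<cdot>\<^sub>m P) $$ (a,b) = (\<i> \<cdot>\<^sub>m P) $$ (a,b)" using P anti[OF ab] by simp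
  qed (use P in auto)
  then show ?thesis using P unfolding hermitian_mat_def P_def[symmetric] by simp
qed

lemma unitary_generator_mult_vec:
  assumes F: "F \<in> carrier_mat d d" and F': "F' \<in> carrier_mat d d" and FF: "adj F * F = 1\<^sub>m d"
    and w: "w \<in> carrier_vec d"
  shows "(\<i> \<cdot>\<^sub>m (F' * adj F)) *\<^sub>v (F *\<^sub>v w) = \<i> \<cdot>\<^sub>v (F' *\<^sub>v w)"
proof -
  have "(\<i> \<cdot>\<^sub>m (F' * adj F)) *\<^sub>v (F *\<^sub>v w) = ((\<i> \<cdot>\<^sub>m (F' * adj F)) * F) *\<^sub>v w"
    by (rule assoc_mult_mat_vec[symmetric]) (use F F' w in auto)
  also have "(\<i> \<cdot>\<^sub>m (F' * adj F)) * F = \<i> \<cdot>\<^sub>m (F' * (adj F * F))"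
    using F F' by (simp add: mult_smult_assoc_mat[of _ d d] assoc_mult_mat[of _ d d _ d _ d])
  also have "\<dots> = \<i> \<cdot>\<^sub>m F'" using FF F' by simp
  finally show ?thesis using smult_mat_mult_mat_vec[OF F' w] by simp
qed

lemma has_vector_derivative_mult_mat_vec_index:
  assumes X: "open X" "x \<in> X" and F: "\<forall>y\<in>X. F y \<in> carrier_mat d d"
    and dF: "has_mat_derivative d F F' x" and F': "F' \<in> carrier_mat d d"
    and v: "v \<in> carrier_vec d" and j: "j < d"
  shows "((\<lambda>y. (F y *\<^sub>v v) $ j) has_vector_derivative (F' *\<^sub>v v) $ j) (at x)"
proof -
  have "((\<lambda>y. \<Sum>b<d. F y $$ (j,b) * v $ b) has_vector_derivative (\<Sum>b<d. F' $$ (j,b) * v $ b)) (at x)"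
    using dF j unfolding has_mat_derivative_def
    by (intro has_vector_derivative_sum has_vector_derivative_mult_left) auto
  then have "((\<lambda>y. (F y *\<^sub>v v) $ j) has_vector_derivative (\<Sum>b<d. F' $$ (j,b) * v $ b)) (at x)"
  proof (rule has_vector_derivative_transform_within_open[OF _ X])
    fix y assume "y \<in> X"
    then show "(\<Sum>b<d. F y $$ (j,b) * v $ b) = (F y *\<^sub>v v) $ j"
      using F v j by (intro index_mult_mat_vec_sum[symmetric]) auto
  qed
  then show ?thesis using F' v j by (simp add: row_scalar_prod_sum)
qed

lemma has_real_derivative_cmod_power2:
  assumes "(f has_vector_derivative f') (at x)"
  shows "((\<lambda>y. (cmod (f y))\<^sup>2) has_real_derivative 2 * Re (cnj (f x) * f')) (at x)"
proof -
  have "((\<lambda>y. f y * cnj (f y)) has_vector_derivative f x * cnj f' + f' * cnj (f x)) (at x)"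
    using assms by (intro has_vector_derivative_mult has_vector_derivative_cnj)
  then have "((\<lambda>y. Re (f y * cnj (f y))) has_vector_derivative Re (f x * cnj f' + f' * cnj (f x))) (at x)"
    by (rule bounded_linear.has_vector_derivative[OF bounded_linear_Re])
  moreover have "(\<lambda>y. Re (f y * cnj (f y))) = (\<lambda>y. (cmod (f y))\<^sup>2)"
    by (simp add: complex_mult_cnj cmod_power2)
  moreover have "Re (f x * cnj f' + f' * cnj (f x)) = 2 * Re (cnj (f x) * f')"
    by (simp add: algebra_simps)
  ultimately show ?thesis by (simp only: has_real_derivative_iff_has_vector_derivative)
qed

section \<open>Fisher information of a unitarily evolving ensemble\<close>

text \<open>Writing \<open>a' = -\<i> (y + c a)\<close>, the contribution of the scalar shift \<open>c\<close> to
  \<open>cnj a * a'\<close> is purely imaginary.\<close>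

lemma abs_Re_cnj_mult_le:
  fixes a a' :: complex and c :: real
  shows "\<bar>Re (cnj a * a')\<bar> \<le> cmod a * cmod (\<i> * a' - of_real c * a)"
proof -
  define y where "y = \<i> * a' - of_real c * a"
  have "cnj a * a' = - \<i> * (cnj a * y) - \<i> * of_real c * (cnj a * a)"
    by (simp add: y_def algebra_simps)
  moreover have "cnj a * a = of_real ((cmod a)\<^sup>2)" by (metis complex_norm_square mult.commute)
  ultimately have "Re (cnj a * a') = Re (- \<i> * (cnj a * y))" by simp
  also have "\<bar>\<dots>\<bar> \<le> cmod (- \<i> * (cnj a * y))" by (rule abs_Re_le_cmod)
  also have "\<dots> = cmod a * cmod y" by (simp add: norm_mult)
  finally show ?thesis by (simp add: y_def)
qed

lemma abs_sum_Re_cnj_mult_le: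
  fixes a a' :: "nat \<Rightarrow> complex" and c :: real
  assumes lam: "\<forall>k<d. lam k \<ge> 0"
  shows "\<bar>\<Sum>k<d. lam k * (2 * Re (cnj (a k) * a' k))\<bar>
    \<le> 2 * (\<Sum>k<d. lam k * (cmod (a k) * cmod (\<i> * a' k - of_real c * a k)))"
proof -
  have "\<bar>\<Sum>k<d. lam k * (2 * Re (cnj (a k) * a' k))\<bar> \<le> (\<Sum>k<d. \<bar>lam k * (2 * Re (cnj (a k) * a' k))\<bar>)"
    by (rule sum_abs)
  also have "\<dots> \<le> (\<Sum>k<d. lam k * (2 * (cmod (a k) * cmod (\<i> * a' k - of_real c * a k))))"
  proof (rule sum_mono)
    fix k assume "k \<in> {..<d}"
    then have "lam k \<ge> 0" using lam by simp
    then show "\<bar>lam k * (2 * Re (cnj (a k) * a' k))\<bar> \<le> lam k * (2 * (cmod (a k) * cmod (\<i> * a' k - of_real c * a k)))"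
      using abs_Re_cnj_mult_le[of "a k" "a' k" c] by (simp add: abs_mult mult_left_mono)
  qed
  finally show ?thesis by (simp add: sum_distrib_left mult_ac)
qed

lemma mult_deriv_ln_power2:
  assumes "(f has_real_derivative f') (at x)" "0 < f x"
  shows "f x * (deriv (\<lambda>y. ln (f y)) x)\<^sup>2 = f'\<^sup>2 / f x"
proof -
  have "deriv (\<lambda>y. ln (f y)) x = f' / f x"
    using DERIV_chain2[OF DERIV_ln[OF assms(2)] assms(1)] by (simp add: DERIV_imp_deriv field_simps)
  then show ?thesis using assms(2) by (simp add: power2_eq_square)
qed

lemma fisher_info_cauchy_schwarz:
  fixes lam :: "nat \<Rightarrow> real" and a y :: "nat \<Rightarrow> nat \<Rightarrow> complex" and p p' :: "nat \<Rightarrow> real"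
  assumes lam: "\<forall>k<d. lam k \<ge> 0" "(\<Sum>k<d. lam k) = 1"
    and y: "\<forall>k<d. (\<Sum>j<d. (cmod (y k j))\<^sup>2) \<le> r\<^sup>2"
    and J: "J \<subseteq> {..<d}" "\<forall>j\<in>J. p j > 0"
    and p: "\<forall>j\<in>J. p j = (\<Sum>k<d. lam k * (cmod (a k j))\<^sup>2)"
    and p': "\<forall>j\<in>J. \<bar>p' j\<bar> \<le> 2 * (\<Sum>k<d. lam k * (cmod (a k j) * cmod (y k j)))"
  shows "(\<Sum>j\<in>J. (p' j)\<^sup>2 / p j) \<le> 4 * r\<^sup>2"
proof -
  define B where "B j = (\<Sum>k<d. lam k * (cmod (y k j))\<^sup>2)" for j
  have B0: "B j \<ge> 0" for j using lam(1) by (auto simp: B_def intro!: sum_nonneg)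
  have "(p' j)\<^sup>2 / p j \<le> 4 * B j" if j: "j \<in> J" for j
  proof -
    have pj: "p j > 0" using J(2) j by simp
    have sq: "\<bar>sqrt (lam k) * x\<bar> * \<bar>sqrt (lam k) * z\<bar> = lam k * (x * z)" if "k < d" "x \<ge> 0" "z \<ge> 0"
      for k and x z :: real
      using lam(1) that by (simp add: abs_mult mult_ac flip: real_sqrt_mult)
    have "\<bar>p' j\<bar> \<le> 2 * (\<Sum>k<d. \<bar>sqrt (lam k) * cmod (a k j)\<bar> * \<bar>sqrt (lam k) * cmod (y k j)\<bar>)"
      using p' j sq by simp
    also have "\<dots> \<le> 2 * (L2_set (\<lambda>k. sqrt (lam k) * cmod (a k j)) {..<d}
                         * L2_set (\<lambda>k. sqrt (lam k) * cmod (y k j)) {..<d})"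
      by (simp add: L2_set_mult_ineq)
    also have "\<dots> = 2 * (sqrt (p j) * sqrt (B j))"
      unfolding L2_set_def B_def p[rule_format, OF j] using lam(1)
      by (simp add: power_mult_distrib)
    finally have "\<bar>p' j\<bar>\<^sup>2 \<le> (2 * (sqrt (p j) * sqrt (B j)))\<^sup>2"
      by (rule power_mono) simp
    then have "(p' j)\<^sup>2 \<le> (2 * (sqrt (p j) * sqrt (B j)))\<^sup>2" by simp
    also have "\<dots> = 4 * p j * B j" using pj B0[of j] by (simp add: power_mult_distrib)
    finally show ?thesis using pj by (simp add: divide_le_eq mult_ac)
  qed
  then have "(\<Sum>j\<in>J. (p' j)\<^sup>2 / p j) \<le> (\<Sum>j<d. 4 * B j)"
    using J(1) B0 by (intro order_trans[OF sum_mono sum_mono2]) auto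
  also have "\<dots> = 4 * (\<Sum>k<d. lam k * (\<Sum>j<d. (cmod (y k j))\<^sup>2))"
    unfolding B_def sum_distrib_left[symmetric] by (subst sum.swap) (simp add: sum_distrib_left)
  also have "\<dots> \<le> 4 * (\<Sum>k<d. lam k * r\<^sup>2)"
    using y lam(1) by (intro mult_left_mono sum_mono) auto
  also have "\<dots> = 4 * r\<^sup>2" using lam(2) by (simp add: sum_distrib_right[symmetric])
  finally show ?thesis .
qed

lemma has_real_derivative_ensemble_prob:
  assumes X: "open X" "\<xi> \<in> X" and R: "\<forall>y\<in>X. R y \<in> carrier_mat d d"
    and dR: "has_mat_derivative d R R' \<xi>" and R': "R' \<in> carrier_mat d d"
    and u: "\<forall>k<d. u k \<in> carrier_vec d" and j: "j < d"
  shows "((\<lambda>y. \<Sum>k<d. lam k * (cmod ((R y *\<^sub>v u k) $ j))\<^sup>2) has_real_derivative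
    (\<Sum>k<d. lam k * (2 * Re (cnj ((R \<xi> *\<^sub>v u k) $ j) * (R' *\<^sub>v u k) $ j)))) (at \<xi>)"
  using u by (intro DERIV_sum DERIV_cmult has_real_derivative_cmod_power2
      has_vector_derivative_mult_mat_vec_index[OF X R dR R' _ j]) simp

lemma fisher_info_unitary_family_le:
  assumes X: "open X" "\<xi> \<in> X" and R: "\<forall>y\<in>X. R y \<in> carrier_mat d d"
    and dR: "has_mat_derivative d R R' \<xi>" and R': "R' \<in> carrier_mat d d"
    and u: "orthonormal_system d d u" and lam: "\<forall>k<d. lam k \<ge> 0" "(\<Sum>k<d. lam k) = 1"
    and shift: "\<forall>v\<in>carrier_vec d.
       vec_norm d (\<i> \<cdot>\<^sub>v (R' *\<^sub>v v) - of_real c \<cdot>\<^sub>v (R \<xi> *\<^sub>v v)) \<le> r * vec_norm d v"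
    and p: "\<forall>j<d. \<forall>y\<in>X. p j y = (\<Sum>k<d. lam k * (cmod ((R y *\<^sub>v u k) $ j))\<^sup>2)"
  shows "(\<Sum>j\<in>{j. j < d \<and> 0 < p j \<xi>}. p j \<xi> * (deriv (\<lambda>y. ln (p j y)) \<xi>)\<^sup>2) \<le> 4 * r\<^sup>2"
proof -
  have uc: "u k \<in> carrier_vec d" if "k < d" for k using u that by (simp add: orthonormal_system_def)
  have Rx: "R \<xi> \<in> carrier_mat d d" using R X by auto
  define a where "a k j = (R \<xi> *\<^sub>v u k) $ j" for k j
  define a' where "a' k j = (R' *\<^sub>v u k) $ j" for k j
  define p' where "p' j = (\<Sum>k<d. lam k * (2 * Re (cnj (a k j) * a' k j)))" for j
  have dp: "(p j has_real_derivative p' j) (at \<xi>)" if j: "j < d" for j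
  proof (rule has_field_derivative_transform_within_open[OF _ X])
    show "((\<lambda>y. \<Sum>k<d. lam k * (cmod ((R y *\<^sub>v u k) $ j))\<^sup>2) has_real_derivative p' j) (at \<xi>)"
      unfolding p'_def a_def a'_def by (rule has_real_derivative_ensemble_prob[OF X R dR R' _ j]) (use uc in blast)
  qed (use p j in simp)
  have y: "(\<Sum>j<d. (cmod (\<i> * a' k j - of_real c * a k j))\<^sup>2) \<le> r\<^sup>2" if k: "k < d" for k
  proof -
    have "vec_norm d (\<i> \<cdot>\<^sub>v (R' *\<^sub>v u k) - of_real c \<cdot>\<^sub>v (R \<xi> *\<^sub>v u k)) \<le> r"
      using shift[rule_format, OF uc[OF k]] orthonormal_system_vec_norm[OF u k] by simp
    then have "(vec_norm d (\<i> \<cdot>\<^sub>v (R' *\<^sub>v u k) - of_real c \<cdot>\<^sub>v (R \<xi> *\<^sub>v u k)))\<^sup>2 \<le> r\<^sup>2"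
      by (rule power_mono) (rule vec_norm_nonneg)
    then show ?thesis using R' Rx uc[OF k] by (simp add: vec_norm_power2 a_def a'_def)
  qed
  have "(\<Sum>j\<in>{j. j < d \<and> 0 < p j \<xi>}. p j \<xi> * (deriv (\<lambda>y. ln (p j y)) \<xi>)\<^sup>2)
      = (\<Sum>j\<in>{j. j < d \<and> 0 < p j \<xi>}. (p' j)\<^sup>2 / p j \<xi>)"
    using mult_deriv_ln_power2[OF dp] by (intro sum.cong) auto
  also have "\<dots> \<le> 4 * r\<^sup>2"
  proof (rule fisher_info_cauchy_schwarz[where y = "\<lambda>k j. \<i> * a' k j - of_real c * a k j" and a = a, OF lam])
    show "\<forall>k<d. (\<Sum>j<d. (cmod (\<i> * a' k j - of_real c * a k j))\<^sup>2) \<le> r\<^sup>2" using y by blast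
    show "\<forall>j\<in>{j. j < d \<and> 0 < p j \<xi>}. p j \<xi> = (\<Sum>k<d. lam k * (cmod (a k j))\<^sup>2)"
      using p X by (simp add: a_def)
    show "\<forall>j\<in>{j. j < d \<and> 0 < p j \<xi>}.
        \<bar>p' j\<bar> \<le> 2 * (\<Sum>k<d. lam k * (cmod (a k j) * cmod (\<i> * a' k j - of_real c * a k j)))"
      unfolding p'_def by (intro ballI abs_sum_Re_cnj_mult_le[OF lam(1)])
  qed auto
  finally show ?thesis .
qed

section \<open>The controlled energy measurement\<close>

lemma Smat_carrier_mat [simp]: "Smat d e y \<in> carrier_mat d d"
  by (simp add: Smat_def)

lemma Smat_unitary:
  assumes u: "orthonormal_system d d (\<lambda>j. e j y)"
  shows "unitary_mat d (Smat d e y)"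
proof -
  define S where "S = Smat d e y"
  have S: "S \<in> carrier_mat d d" by (simp add: S_def)
  have "S * adj S = 1\<^sub>m d"
  proof (rule eq_matI)
    fix j k assume "j < dim_row (1\<^sub>m d)" "k < dim_col (1\<^sub>m d)"
    then have jk: "j < d" "k < d" by auto
    have "(S * adj S) $$ (j,k) = (\<Sum>a<d. S $$ (j,a) * adj S $$ (a,k))"
      by (rule index_mult_mat_sum[OF S adj_carrier_mat[OF S] jk])
    also have "\<dots> = e k y \<bullet>c e j y"
      using jk u by (simp add: S_def Smat_def cscalar_prod_sum[of _ d] orthonormal_system_def mult.commute)
    also have "\<dots> = 1\<^sub>m d $$ (j,k)" using u jk by (auto simp: orthonormal_system_def)
    finally show "(S * adj S) $$ (j,k) = 1\<^sub>m d $$ (j,k)" .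
  qed (use S in auto)
  then show ?thesis
    using S mat_mult_left_right_inverse[OF S adj_carrier_mat[OF S]] by (simp add: unitary_mat_def S_def)
qed

lemma Smat_has_mat_derivative:
  assumes "\<forall>j<d. \<forall>k<d. (\<lambda>y. e j y $ k) differentiable (at \<xi>)"
  shows "has_mat_derivative d (Smat d e) (mderiv d (Smat d e) \<xi>) \<xi>"
proof (rule has_mat_derivative_mderiv, intro allI impI)
  fix a b assume ab: "a < d" "b < d"
  have "(\<lambda>y. cnj (e a y $ b)) differentiable (at \<xi>)"
    using differentiable_compose[OF bounded_linear_imp_differentiable[OF bounded_linear_cnj]] assms ab
    by blast
  then show "(\<lambda>y. Smat d e y $$ (a,b)) differentiable (at \<xi>)" using ab by (simp add: Smat_def)
qed

lemma evol_eigenbasis_expansion: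
  assumes H: "H y \<in> carrier_mat d d" and u: "orthonormal_system d d (\<lambda>j. e j y)"
    and eig: "\<forall>j<d. H y *\<^sub>v e j y = of_real (E j y) \<cdot>\<^sub>v e j y"
  shows "evol H t y \<in> carrier_mat d d"
    and "\<forall>a<d. \<forall>b<d. evol H t y $$ (a,b) =
       (\<Sum>j<d. exp (- \<i> * of_real t * of_real (E j y)) * e j y $ a * cnj (e j y $ b))"
proof -
  have B: "(- (\<i> * of_real t)) \<cdot>\<^sub>m H y \<in> carrier_mat d d" using H by simp
  have "\<forall>j<d. ((- (\<i> * of_real t)) \<cdot>\<^sub>m H y) *\<^sub>v e j y = (- \<i> * of_real t * of_real (E j y)) \<cdot>\<^sub>v e j y"
    using eig u H by (auto simp: smult_mat_mult_mat_vec smult_smult_assoc orthonormal_system_def)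
  then show "\<forall>a<d. \<forall>b<d. evol H t y $$ (a,b) =
       (\<Sum>j<d. exp (- \<i> * of_real t * of_real (E j y)) * e j y $ a * cnj (e j y $ b))"
    using mat_exp_eigenbasis[OF B u] by (simp add: evol_def)
  show "evol H t y \<in> carrier_mat d d" using H by (simp add: evol_def mat_exp_def)
qed

lemma evol_unitary:
  assumes "H y \<in> carrier_mat d d" "orthonormal_system d d (\<lambda>j. e j y)"
    "\<forall>j<d. H y *\<^sub>v e j y = of_real (E j y) \<cdot>\<^sub>v e j y"
  shows "unitary_mat d (evol H t y)"
proof (rule eigenbasis_expansion_unitary[OF assms(2) evol_eigenbasis_expansion[of H y d e E t, OF assms]])
  have "cmod (exp (- \<i> * of_real t * of_real l)) = 1" for l by simp
  then show "\<forall>k<d. exp (- \<i> * of_real t * of_real (E k y)) * cnj (exp (- \<i> * of_real t * of_real (E k y))) = 1"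
    by (metis complex_norm_square of_real_1 one_power2)
qed

lemma unit_eigenvalue_quadratic_form:
  assumes A: "A \<in> carrier_mat d d" and v: "v \<in> carrier_vec d" "v \<bullet>c v = 1"
    and Av: "A *\<^sub>v v = of_real l \<cdot>\<^sub>v v"
  shows "of_real l = (\<Sum>a<d. \<Sum>b<d. A $$ (a,b) * v $ b * cnj (v $ a))"
proof -
  have "of_real l = (A *\<^sub>v v) \<bullet>c v"
    using cscalar_prod_smult_left[OF v(1) v(1), of "of_real l"] v(2) by (simp add: Av)
  also have "\<dots> = (\<Sum>a<d. \<Sum>b<d. A $$ (a,b) * v $ b * cnj (v $ a))"
    using A v(1) by (simp add: cscalar_prod_sum[of _ d] row_scalar_prod_sum sum_distrib_right)
  finally show ?thesis .
qed

text \<open>On \<open>X\<close> the eigenvalues are quadratic forms of \<open>H\<close> in the eigenvectors, so the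
  eigenbasis expansion of the evolution is built from differentiable entries.\<close>

lemma evol_has_mat_derivative:
  assumes X: "open X" "\<xi> \<in> X" and H: "\<forall>y\<in>X. H y \<in> carrier_mat d d"
    and u: "\<forall>y\<in>X. orthonormal_system d d (\<lambda>j. e j y)"
    and eig: "\<forall>y\<in>X. \<forall>j<d. H y *\<^sub>v e j y = of_real (E j y) \<cdot>\<^sub>v e j y"
    and H_diff: "\<forall>a<d. \<forall>b<d. (\<lambda>y. H y $$ (a,b)) differentiable (at \<xi>)"
    and e_diff: "\<forall>j<d. \<forall>k<d. (\<lambda>y. e j y $ k) differentiable (at \<xi>)"
  shows "has_mat_derivative d (evol H t) (mderiv d (evol H t) \<xi>) \<xi>"
proof (rule has_mat_derivative_mderiv, intro allI impI)
  fix a b assume ab: "a < d" "b < d"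
  have cnj_diff: "(\<lambda>y. cnj (f y)) differentiable (at \<xi>)" if "f differentiable (at \<xi>)" for f :: "real \<Rightarrow> complex"
    using differentiable_compose[OF bounded_linear_imp_differentiable[OF bounded_linear_cnj] that] by simp
  have exp_diff: "(\<lambda>y. exp (f y)) differentiable (at \<xi>)" if "f differentiable (at \<xi>)" for f :: "real \<Rightarrow> complex"
  proof -
    have "exp differentiable (at (f \<xi>))"
      unfolding differentiable_def using DERIV_exp has_field_derivative_def by blast
    then show ?thesis by (rule differentiable_compose[OF _ that, unfolded o_def])
  qed
  define Q where "Q j y = (\<Sum>a<d. \<Sum>b<d. H y $$ (a,b) * e j y $ b * cnj (e j y $ a))" for j y
  define f where "f y = (\<Sum>j<d. exp (- \<i> * of_real t * Q j y) * e j y $ a * cnj (e j y $ b))" for y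
  have f_diff: "f differentiable (at \<xi>)"
    unfolding f_def Q_def using H_diff e_diff ab
    by (intro differentiable_sum ballI finite_lessThan differentiable_mult differentiable_const cnj_diff exp_diff)
      auto
  have f_eq: "f y = evol H t y $$ (a,b)" if "y \<in> X" for y
  proof -
    have "Q j y = of_real (E j y)" if "j < d" for j
      unfolding Q_def using u eig H \<open>y \<in> X\<close> that
      by (intro unit_eigenvalue_quadratic_form[symmetric]) (auto simp: orthonormal_system_def)
    then show ?thesis
      using evol_eigenbasis_expansion(2)[of H y d e E t] H u eig \<open>y \<in> X\<close> ab by (simp add: f_def)
  qed
  have "(f has_vector_derivative vector_derivative f (at \<xi>)) (at \<xi>)"
    using f_diff vector_derivative_works by blast
  then have "((\<lambda>y. evol H t y $$ (a,b)) has_vector_derivative vector_derivative f (at \<xi>)) (at \<xi>)"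
    by (rule has_vector_derivative_transform_within_open[OF _ X]) (rule f_eq)
  then show "(\<lambda>y. evol H t y $$ (a,b)) differentiable (at \<xi>)" by (rule differentiableI_vector)
qed

lemma proj_carrier_mat [simp]: "proj d f \<in> carrier_mat d d"
  by (simp add: proj_def)

lemma mtrace_mult_proj:
  assumes M: "M \<in> carrier_mat d d" and f: "f \<in> carrier_vec d"
  shows "mtrace (M * proj d f) = (M *\<^sub>v f) \<bullet>c f"
proof -
  have "mtrace (M * proj d f) = (\<Sum>a<d. \<Sum>b<d. M $$ (a,b) * (f $ b * cnj (f $ a)))"
    unfolding mtrace_def using M by (intro sum.cong) (auto simp: proj_def scalar_prod_def atLeast0LessThan)
  also have "\<dots> = (M *\<^sub>v f) \<bullet>c f"
    using M f by (simp add: cscalar_prod_sum[of _ d] row_scalar_prod_sum sum_distrib_left sum_distrib_right mult_ac)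
  finally show ?thesis .
qed

lemma Re_quadratic_form_expansion:
  assumes \<rho>: "\<rho> \<in> carrier_mat d d"
    and \<rho>e: "\<forall>a<d. \<forall>b<d. \<rho> $$ (a,b) = (\<Sum>k<d. of_real (lam k) * u k $ a * cnj (u k $ b))"
    and u: "\<forall>k<d. u k \<in> carrier_vec d" and x: "x \<in> carrier_vec d"
  shows "Re ((\<rho> *\<^sub>v x) \<bullet>c x) = (\<Sum>k<d. lam k * (cmod (u k \<bullet>c x))\<^sup>2)"
proof -
  have \<rho>x: "(\<rho> *\<^sub>v x) $ a = (\<Sum>k<d. of_real (lam k) * cnj (u k \<bullet>c x) * u k $ a)" if a: "a < d" for a
  proof -
    have "(\<rho> *\<^sub>v x) $ a = (\<Sum>b<d. \<Sum>k<d. of_real (lam k) * u k $ a * (cnj (u k $ b) * x $ b))"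
      using \<rho> \<rho>e x a by (simp add: row_scalar_prod_sum sum_distrib_left sum_distrib_right mult_ac)
    also have "\<dots> = (\<Sum>k<d. of_real (lam k) * cnj (u k \<bullet>c x) * u k $ a)"
      using x by (subst sum.swap) (simp add: cscalar_prod_sum[of _ d] sum_distrib_left mult_ac)
    finally show ?thesis .
  qed
  have "(\<rho> *\<^sub>v x) \<bullet>c x = (\<Sum>a<d. \<Sum>k<d. of_real (lam k) * cnj (u k \<bullet>c x) * (u k $ a * cnj (x $ a)))"
    using x \<rho>x by (simp add: cscalar_prod_sum[of x d] sum_distrib_left sum_distrib_right mult_ac)
  also have "\<dots> = (\<Sum>k<d. of_real (lam k) * (cnj (u k \<bullet>c x) * (u k \<bullet>c x)))"
    using x by (subst sum.swap) (simp add: cscalar_prod_sum[of x d] sum_distrib_left mult_ac)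
  finally show ?thesis by (simp add: complex_mult_cnj cmod_power2 mult.commute)
qed

lemma Smat_mult_vec_index:
  "x \<in> carrier_vec d \<Longrightarrow> e j y \<in> carrier_vec d \<Longrightarrow> j < d \<Longrightarrow> (Smat d e y *\<^sub>v x) $ j = x \<bullet>c e j y"
  by (simp add: Smat_def scalar_prod_def atLeast0LessThan cscalar_prod_sum[of _ d] mult.commute)

lemma outcome_prob_expansion:
  assumes U: "evol H t y \<in> carrier_mat d d" and V: "V \<in> carrier_mat d d" and \<rho>: "\<rho> \<in> carrier_mat d d"
    and \<rho>e: "\<forall>a<d. \<forall>b<d. \<rho> $$ (a,b) = (\<Sum>k<d. of_real (lam k) * u k $ a * cnj (u k $ b))"
    and u: "\<forall>k<d. u k \<in> carrier_vec d" and e: "e j y \<in> carrier_vec d" and j: "j < d"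
  shows "outcome_prob d H e t \<rho> V j y = (\<Sum>k<d. lam k * (cmod (((Smat d e y * V * evol H t y) *\<^sub>v u k) $ j))\<^sup>2)"
proof -
  define W where "W = V * evol H t y"
  have W: "W \<in> carrier_mat d d" using U V by (simp add: W_def)
  have "mtrace (evol H t y * \<rho> * adj (evol H t y) * adj V * proj d (e j y) * V)
      = mtrace (V * (evol H t y * \<rho> * adj (evol H t y) * adj V * proj d (e j y)))"
    using U V \<rho> by (intro mtrace_mult_comm) (auto intro!: mult_carrier_mat)
  also have "\<dots> = mtrace (W * \<rho> * adj W * proj d (e j y))"
    using U V \<rho>
    by (simp add: W_def adj_mult[OF V U] assoc_mult_mat[of _ d d _ d _ d] mult_carrier_mat[of _ d d _ d])
  also have "\<dots> = ((W * \<rho> * adj W) *\<^sub>v e j y) \<bullet>c e j y"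
    using W \<rho> e by (intro mtrace_mult_proj) (simp_all add: mult_carrier_mat[of _ d d _ d])
  also have "(W * \<rho> * adj W) *\<^sub>v e j y = W *\<^sub>v (\<rho> *\<^sub>v (adj W *\<^sub>v e j y))"
    using W \<rho> e
    by (simp add: assoc_mult_mat_vec[of _ d d _ d] mult_mat_vec_carrier[of _ d d] mult_carrier_mat[of _ d d _ d])
  also have "(W *\<^sub>v (\<rho> *\<^sub>v (adj W *\<^sub>v e j y))) \<bullet>c e j y = (\<rho> *\<^sub>v (adj W *\<^sub>v e j y)) \<bullet>c (adj W *\<^sub>v e j y)"
    using W \<rho> e by (intro cscalar_prod_adj) (auto simp: mult_mat_vec_carrier[of _ d d])
  finally have "outcome_prob d H e t \<rho> V j y = (\<Sum>k<d. lam k * (cmod (u k \<bullet>c (adj W *\<^sub>v e j y)))\<^sup>2)"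
    using Re_quadratic_form_expansion[OF \<rho> \<rho>e u mult_mat_vec_carrier[OF adj_carrier_mat[OF W] e]]
    by (simp add: outcome_prob_def)
  also have "\<dots> = (\<Sum>k<d. lam k * (cmod (((Smat d e y * V * evol H t y) *\<^sub>v u k) $ j))\<^sup>2)"
  proof (intro sum.cong refl)
    fix k assume "k \<in> {..<d}"
    then have uk: "u k \<in> carrier_vec d" using u by simp
    have "u k \<bullet>c (adj W *\<^sub>v e j y) = (W *\<^sub>v u k) \<bullet>c e j y" by (rule cscalar_prod_adj[OF W uk e, symmetric])
    also have "\<dots> = (Smat d e y *\<^sub>v (W *\<^sub>v u k)) $ j"
      using mult_mat_vec_carrier[OF W uk] e j by (simp add: Smat_mult_vec_index)
    also have "Smat d e y *\<^sub>v (W *\<^sub>v u k) = (Smat d e y * V * evol H t y) *\<^sub>v u k"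
      using U V uk by (simp add: W_def assoc_mult_mat_vec[of _ d d _ d] mult_carrier_mat[of _ d d _ d]
          mult_mat_vec_carrier[of _ d d])
    finally show "lam k * (cmod (u k \<bullet>c (adj W *\<^sub>v e j y)))\<^sup>2
        = lam k * (cmod (((Smat d e y * V * evol H t y) *\<^sub>v u k) $ j))\<^sup>2" by simp
  qed
  finally show ?thesis .
qed

lemma has_mat_derivative_mult_const_mult:
  assumes X: "open X" "x \<in> X" and FG: "\<forall>y\<in>X. F y \<in> carrier_mat d d \<and> G y \<in> carrier_mat d d"
    and V: "V \<in> carrier_mat d d" and F': "F' \<in> carrier_mat d d" and G': "G' \<in> carrier_mat d d"
    and dF: "has_mat_derivative d F F' x" and dG: "has_mat_derivative d G G' x"
  shows "has_mat_derivative d (\<lambda>y. F y * V * G y) (F' * V * G x + F x * V * G') x"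
proof -
  have "has_mat_derivative d (\<lambda>y. F y * V) (F' * V + F x * 0\<^sub>m d d) x"
    using FG V F' by (intro has_mat_derivative_mult[OF X _ F' _ dF has_mat_derivative_const]) auto
  moreover have "F' * V + F x * 0\<^sub>m d d = F' * V" using FG X F' V by auto
  ultimately show ?thesis
    using FG X V F' G' by (intro has_mat_derivative_mult[OF X _ _ G' _ dG, of "\<lambda>y. F y * V", simplified]) auto
qed

lemma product_generator_mult_vec:
  assumes S: "S \<in> carrier_mat d d" "adj S * S = 1\<^sub>m d" and V: "V \<in> carrier_mat d d"
    and U: "U \<in> carrier_mat d d" "adj U * U = 1\<^sub>m d"
    and S': "S' \<in> carrier_mat d d" and U': "U' \<in> carrier_mat d d" and v: "v \<in> carrier_vec d"
  shows "\<i> \<cdot>\<^sub>v ((S' * V * U + S * V * U') *\<^sub>v v)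
    = (\<i> \<cdot>\<^sub>m (S' * adj S)) *\<^sub>v ((S * V * U) *\<^sub>v v) + S *\<^sub>v (V *\<^sub>v ((\<i> \<cdot>\<^sub>m (U' * adj U)) *\<^sub>v (U *\<^sub>v v)))"
proof -
  have "\<i> \<cdot>\<^sub>v ((S' * V * U + S * V * U') *\<^sub>v v) = \<i> \<cdot>\<^sub>v ((S' * V * U) *\<^sub>v v) + \<i> \<cdot>\<^sub>v ((S * V * U') *\<^sub>v v)"
    using S V U S' U' v
    by (simp add: add_mult_distrib_mat_vec[of _ d d] smult_add_distrib_vec[of _ d] mult_carrier_mat[of _ d d _ d]
        mult_mat_vec_carrier[of _ d d])
  also have "\<i> \<cdot>\<^sub>v ((S' * V * U) *\<^sub>v v) = (\<i> \<cdot>\<^sub>m (S' * adj S)) *\<^sub>v ((S * V * U) *\<^sub>v v)"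
    using unitary_generator_mult_vec[OF S(1) S' S(2), of "V *\<^sub>v (U *\<^sub>v v)"] S(1) S' V U v
    by (simp add: assoc_mult_mat_vec[of _ d d _ d] mult_carrier_mat[of _ d d _ d])
  also have "\<i> \<cdot>\<^sub>v ((S * V * U') *\<^sub>v v) = S *\<^sub>v (V *\<^sub>v ((\<i> \<cdot>\<^sub>m (U' * adj U)) *\<^sub>v (U *\<^sub>v v)))"
    using unitary_generator_mult_vec[OF U(1) U' U(2) v] S V U' v
    by (simp add: assoc_mult_mat_vec[of _ d d _ d] mult_mat_vec)
  finally show ?thesis .
qed

text \<open>Shifting each generator by the midpoint of its spectrum bounds both terms of
  \<open>\<i> R' = g\<^sub>S R + S V g\<^sub>U U\<close> by half their spectral gaps.\<close>

lemma product_generator_shift_bound: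
  assumes S: "unitary_mat d S" and V: "unitary_mat d V" and U: "unitary_mat d U"
    and S': "S' \<in> carrier_mat d d" and U': "U' \<in> carrier_mat d d"
    and gS: "hermitian_mat d (\<i> \<cdot>\<^sub>m (S' * adj S))" and gU: "hermitian_mat d (\<i> \<cdot>\<^sub>m (U' * adj U))"
    and d: "0 < d"
  shows "\<exists>c. \<forall>v\<in>carrier_vec d.
    vec_norm d (\<i> \<cdot>\<^sub>v ((S' * V * U + S * V * U') *\<^sub>v v) - of_real c \<cdot>\<^sub>v ((S * V * U) *\<^sub>v v))
      \<le> (spectral_gap (\<i> \<cdot>\<^sub>m (S' * adj S)) + spectral_gap (\<i> \<cdot>\<^sub>m (U' * adj U))) / 2 * vec_norm d v"
proof -
  define GS GU where "GS = \<i> \<cdot>\<^sub>m (S' * adj S)" and "GU = \<i> \<cdot>\<^sub>m (U' * adj U)"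
  have Sc: "S \<in> carrier_mat d d" "adj S * S = 1\<^sub>m d" and Vc: "V \<in> carrier_mat d d" "adj V * V = 1\<^sub>m d"
    and Uc: "U \<in> carrier_mat d d" "adj U * U = 1\<^sub>m d" using S V U by (auto simp: unitary_mat_def)
  have GSc: "GS \<in> carrier_mat d d" and GUc: "GU \<in> carrier_mat d d"
    using gS gU by (auto simp: GS_def GU_def hermitian_mat_def)
  obtain cS cU where
    cS: "\<forall>v\<in>carrier_vec d. vec_norm d (GS *\<^sub>v v - of_real cS \<cdot>\<^sub>v v) \<le> spectral_gap GS / 2 * vec_norm d v" and
    cU: "\<forall>v\<in>carrier_vec d. vec_norm d (GU *\<^sub>v v - of_real cU \<cdot>\<^sub>v v) \<le> spectral_gap GU / 2 * vec_norm d v"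
    using spectral_gap_shift_bound[OF gS d] spectral_gap_shift_bound[OF gU d] by (auto simp: GS_def GU_def)
  have "vec_norm d (\<i> \<cdot>\<^sub>v ((S' * V * U + S * V * U') *\<^sub>v v) - of_real (cS + cU) \<cdot>\<^sub>v ((S * V * U) *\<^sub>v v))
      \<le> (spectral_gap GS + spectral_gap GU) / 2 * vec_norm d v" if v: "v \<in> carrier_vec d" for v
  proof -
    define w where "w = U *\<^sub>v v"
    define z where "z = (S * V * U) *\<^sub>v v"
    have wc: "w \<in> carrier_vec d" and zc: "z \<in> carrier_vec d"
      using Sc Vc Uc v by (auto simp: w_def z_def mult_carrier_mat[of _ d d _ d] mult_mat_vec_carrier[of _ d d])
    have z: "z = S *\<^sub>v (V *\<^sub>v w)" using Sc Vc Uc v by (simp add: w_def z_def assoc_mult_mat_vec[of _ d d _ d])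
    have "S *\<^sub>v (V *\<^sub>v (GU *\<^sub>v w - of_real cU \<cdot>\<^sub>v w)) = S *\<^sub>v (V *\<^sub>v (GU *\<^sub>v w)) - of_real cU \<cdot>\<^sub>v z"
      using Sc Vc GUc wc by (simp add: z mult_minus_distrib_mat_vec[of _ d d] mult_mat_vec)
    moreover have "p + q - of_real (cS + cU) \<cdot>\<^sub>v z = (p - of_real cS \<cdot>\<^sub>v z) + (q - of_real cU \<cdot>\<^sub>v z)"
      if "p \<in> carrier_vec d" "q \<in> carrier_vec d" for p q
      using that zc by (intro eq_vecI) (auto simp: algebra_simps)
    ultimately have split: "\<i> \<cdot>\<^sub>v ((S' * V * U + S * V * U') *\<^sub>v v) - of_real (cS + cU) \<cdot>\<^sub>v ((S * V * U) *\<^sub>v v)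
        = (GS *\<^sub>v z - of_real cS \<cdot>\<^sub>v z) + S *\<^sub>v (V *\<^sub>v (GU *\<^sub>v w - of_real cU \<cdot>\<^sub>v w))"
      unfolding product_generator_mult_vec[OF Sc Vc(1) Uc S' U' v] GS_def[symmetric] GU_def[symmetric]
        z_def[symmetric] w_def[symmetric]
      using Sc Vc GSc GUc zc wc by simp
    have "vec_norm d (S *\<^sub>v (V *\<^sub>v (GU *\<^sub>v w - of_real cU \<cdot>\<^sub>v w))) = vec_norm d (GU *\<^sub>v w - of_real cU \<cdot>\<^sub>v w)"
      using Sc Vc GUc wc by (simp add: unitary_vec_norm)
    moreover have "vec_norm d z = vec_norm d v" "vec_norm d w = vec_norm d v"
      using Sc Vc Uc v wc by (simp_all add: z w_def unitary_vec_norm)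
    ultimately have "vec_norm d (GS *\<^sub>v z - of_real cS \<cdot>\<^sub>v z) + vec_norm d (S *\<^sub>v (V *\<^sub>v (GU *\<^sub>v w - of_real cU \<cdot>\<^sub>v w)))
        \<le> (spectral_gap GS + spectral_gap GU) / 2 * vec_norm d v"
      using cS[rule_format, OF zc] cU[rule_format, OF wc]
        distrib_right[of "spectral_gap GS / 2" "spectral_gap GU / 2" "vec_norm d v"]
      by (simp add: add_divide_distrib)
    moreover have "vec_norm d ((GS *\<^sub>v z - of_real cS \<cdot>\<^sub>v z) + S *\<^sub>v (V *\<^sub>v (GU *\<^sub>v w - of_real cU \<cdot>\<^sub>v w)))
        \<le> vec_norm d (GS *\<^sub>v z - of_real cS \<cdot>\<^sub>v z) + vec_norm d (S *\<^sub>v (V *\<^sub>v (GU *\<^sub>v w - of_real cU \<cdot>\<^sub>v w)))"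
      using Sc Vc GSc GUc zc wc by (intro vec_norm_triangle) auto
    ultimately show ?thesis unfolding split by linarith
  qed
  then show ?thesis unfolding GS_def GU_def by blast
qed

lemma fisher_info_product_family_le:
  assumes X: "open X" "\<xi> \<in> X"
    and S: "\<forall>y\<in>X. unitary_mat d (S y)" and U: "\<forall>y\<in>X. unitary_mat d (U y)" and V: "unitary_mat d V"
    and dS: "has_mat_derivative d S S' \<xi>" "S' \<in> carrier_mat d d"
    and dU: "has_mat_derivative d U U' \<xi>" "U' \<in> carrier_mat d d"
    and u: "orthonormal_system d d u" and lam: "\<forall>k<d. lam k \<ge> 0" "(\<Sum>k<d. lam k) = 1"
    and p: "\<forall>j<d. \<forall>y\<in>X. p j y = (\<Sum>k<d. lam k * (cmod (((S y * V * U y) *\<^sub>v u k) $ j))\<^sup>2)"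
  shows "(\<Sum>j\<in>{j. j < d \<and> 0 < p j \<xi>}. p j \<xi> * (deriv (\<lambda>y. ln (p j y)) \<xi>)\<^sup>2)
    \<le> (spectral_gap (\<i> \<cdot>\<^sub>m (U' * adj (U \<xi>))) + spectral_gap (\<i> \<cdot>\<^sub>m (S' * adj (S \<xi>))))\<^sup>2"
proof (cases "d = 0")
  case False
  define R' where "R' = S' * V * U \<xi> + S \<xi> * V * U'"
  have Sc: "\<forall>y\<in>X. S y \<in> carrier_mat d d" and Uc: "\<forall>y\<in>X. U y \<in> carrier_mat d d"
    and Vc: "V \<in> carrier_mat d d" using S U V by (simp_all add: unitary_mat_def)
  have dR: "has_mat_derivative d (\<lambda>y. S y * V * U y) R' \<xi>"
    unfolding R'_def using Sc Uc by (intro has_mat_derivative_mult_const_mult[OF X _ Vc dS(2) dU(2) dS(1) dU(1)]) auto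
  have "R' \<in> carrier_mat d d" "\<forall>y\<in>X. S y * V * U y \<in> carrier_mat d d"
    using Sc Uc Vc dS(2) dU(2) X by (auto simp: R'_def intro!: add_carrier_mat mult_carrier_mat)
  moreover obtain c where "\<forall>v\<in>carrier_vec d. vec_norm d (\<i> \<cdot>\<^sub>v (R' *\<^sub>v v) - of_real c \<cdot>\<^sub>v ((S \<xi> * V * U \<xi>) *\<^sub>v v))
      \<le> (spectral_gap (\<i> \<cdot>\<^sub>m (S' * adj (S \<xi>))) + spectral_gap (\<i> \<cdot>\<^sub>m (U' * adj (U \<xi>)))) / 2 * vec_norm d v"
    using product_generator_shift_bound[OF S[rule_format, OF X(2)] V U[rule_format, OF X(2)] dS(2) dU(2)
        unitary_generator_hermitian[OF X S dS] unitary_generator_hermitian[OF X U dU]] False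
    unfolding R'_def by auto
  ultimately have "(\<Sum>j\<in>{j. j < d \<and> 0 < p j \<xi>}. p j \<xi> * (deriv (\<lambda>y. ln (p j y)) \<xi>)\<^sup>2)
    \<le> 4 * ((spectral_gap (\<i> \<cdot>\<^sub>m (S' * adj (S \<xi>))) + spectral_gap (\<i> \<cdot>\<^sub>m (U' * adj (U \<xi>)))) / 2)\<^sup>2"
    by (intro fisher_info_unitary_family_le[OF X _ dR _ u lam _ p]) auto
  then show ?thesis by (simp add: power_divide add.commute)
qed simp

theorem proposition1:
  fixes d :: nat and \<Xi> :: "real set" and H :: "real \<Rightarrow> complex mat"
    and E :: "nat \<Rightarrow> real \<Rightarrow> real" and e :: "nat \<Rightarrow> real \<Rightarrow> complex vec"
    and t \<xi> :: real
  assumes "open \<Xi>" and "\<xi> \<in> \<Xi>"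
    and herm: "\<forall>x\<in>\<Xi>. hermitian_mat d (H x)"
    and H_diff: "\<forall>x\<in>\<Xi>. \<forall>i<d. \<forall>j<d. (\<lambda>y. H y $$ (i,j)) differentiable (at x)"
    and eigvec: "\<forall>x\<in>\<Xi>. \<forall>j<d. e j x \<in> carrier_vec d \<and> H x *\<^sub>v e j x = of_real (E j x) \<cdot>\<^sub>v e j x"
    and orthonormal: "\<forall>x\<in>\<Xi>. \<forall>j<d. \<forall>k<d. e j x \<bullet>c e k x = (if j = k then 1 else 0)"
    and nondeg_sorted: "\<forall>x\<in>\<Xi>. \<forall>j k. j < k \<and> k < d \<longrightarrow> E j x < E k x"
    and e_diff: "\<forall>x\<in>\<Xi>. \<forall>j<d. \<forall>k<d. (\<lambda>y. e j y $ k) differentiable (at x)"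
  shows "\<forall>\<rho>0 V. density_mat d \<rho>0 \<and> unitary_mat d V \<longrightarrow>
           fisher_info d H e t \<rho>0 V \<xi>
             \<le> (spectral_gap (gU d H t \<xi>) + spectral_gap (gS d e \<xi>))^2"
proof (intro allI impI)
  fix \<rho>0 V assume \<rho>V: "density_mat d \<rho>0 \<and> unitary_mat d V"
  note X = \<open>open \<Xi>\<close> \<open>\<xi> \<in> \<Xi>\<close>
  have Hc: "\<forall>y\<in>\<Xi>. H y \<in> carrier_mat d d" using herm by (simp add: hermitian_mat_def)
  have onb: "\<forall>y\<in>\<Xi>. orthonormal_system d d (\<lambda>j. e j y)"
    using eigvec orthonormal by (simp add: orthonormal_system_def)
  have eig: "\<forall>y\<in>\<Xi>. \<forall>j<d. H y *\<^sub>v e j y = of_real (E j y) \<cdot>\<^sub>v e j y" using eigvec by simp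
  have U: "\<forall>y\<in>\<Xi>. unitary_mat d (evol H t y)" using Hc onb eig by (simp add: evol_unitary[of H _ d e E t])
  obtain u lam where u: "orthonormal_system d d u" and lam: "\<forall>k<d. lam k \<ge> 0" "(\<Sum>k<d. lam k) = 1"
    and \<rho>e: "\<forall>a<d. \<forall>b<d. \<rho>0 $$ (a,b) = (\<Sum>k<d. of_real (lam k) * u k $ a * cnj (u k $ b))"
    using density_mat_eigenbasis \<rho>V by blast
  have "\<forall>j<d. \<forall>y\<in>\<Xi>. outcome_prob d H e t \<rho>0 V j y
      = (\<Sum>k<d. lam k * (cmod (((Smat d e y * V * evol H t y) *\<^sub>v u k) $ j))\<^sup>2)"
    using outcome_prob_expansion[OF _ _ _ \<rho>e] U \<rho>V eigvec u
    by (auto simp: unitary_mat_def density_mat_def hermitian_mat_def orthonormal_system_def)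
  then show "fisher_info d H e t \<rho>0 V \<xi> \<le> (spectral_gap (gU d H t \<xi>) + spectral_gap (gS d e \<xi>))\<^sup>2"
    unfolding fisher_info_def gU_def gS_def
    using onb Smat_unitary H_diff e_diff X \<rho>V
    by (intro fisher_info_product_family_le[OF X _ U _ Smat_has_mat_derivative mderiv_carrier_mat
          evol_has_mat_derivative[OF X Hc onb eig] mderiv_carrier_mat u lam]) auto
qed

end
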